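(* Let $X$ and $Y$ be compact Hausdorff spaces, and let $E\subseteq C(X)$ and $F\subseteq C(Y)$ be Riesz subspaces, dense for the supremum norm, containing the respective constant functions. Let $G$ be an Archimedean Riesz space and $\phi:E\times F\to G$ a Riesz bimorphism, and let $\chi:E\times F\to C(X\times Y)$ be the natural bilinear embedding, $\chi(f,g)(x,y)=f(x)g(y)$. Let $E\overline{\otimes}_\chi F$ be the Riesz subspace of $C(X\times Y)$ generated by $\chi(E\times F)$. Then there is a unique Riesz homomorphism $T:E\overline{\otimes}_\chi F\to G$ such that $\phi=T\circ\chi$. Furthermore, if $\phi$ is bi-injective then $T$ is a Riesz isomorphism of $E\overline{\otimes}_\chi F$ onto $E\overline{\otimes}_\phi F$, the Riesz subspace of $G$ generated by $\phi(E\times F)$.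
   Context: A linear map $T$ between Riesz spaces is a Riesz homomorphism if $T(x\vee y)=Tx\vee Ty$. A bilinear map $\phi:E\times F\to G$ is a Riesz bimorphism if $\phi(\cdot,y)$ is a Riesz homomorphism for every $y\in F_+$ and $\phi(x,\cdot)$ is a Riesz homomorphism for every $x\in E_+$. $\phi$ is bi-injective if $\phi(x,y)=0$ implies $x=0$ or $y=0$. *)

theory Defs
  imports "HOL-Analysis.Analysis"
begin

class riesz_space = ordered_real_vector + lattice

class archimedean_riesz_space = riesz_space +
  assumes archimedean: "0 \<le> x \<Longrightarrow> (\<forall>n::nat. real n *\<^sub>R x \<le> y) \<Longrightarrow> x = 0"

definition cfun :: "('a::topological_space \<Rightarrow> real) set" where
  "cfun = {f. continuous_on UNIV f}"

definition riesz_subspace_fun :: "('a \<Rightarrow> real) set \<Rightarrow> bool" where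
  "riesz_subspace_fun S \<longleftrightarrow> (\<lambda>x. 0) \<in> S \<and>
     (\<forall>f\<in>S. \<forall>g\<in>S. (\<lambda>x. f x + g x) \<in> S) \<and>
     (\<forall>c. \<forall>f\<in>S. (\<lambda>x. c * f x) \<in> S) \<and>
     (\<forall>f\<in>S. \<forall>g\<in>S. (\<lambda>x. max (f x) (g x)) \<in> S)"

definition gen_riesz_fun :: "('a \<Rightarrow> real) set \<Rightarrow> ('a \<Rightarrow> real) set" where
  "gen_riesz_fun S = \<Inter>{W. riesz_subspace_fun W \<and> S \<subseteq> W}"

definition riesz_subspace :: "'g::riesz_space set \<Rightarrow> bool" where
  "riesz_subspace S \<longleftrightarrow> 0 \<in> S \<and> (\<forall>x\<in>S. \<forall>y\<in>S. x + y \<in> S) \<and>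
     (\<forall>c. \<forall>x\<in>S. c *\<^sub>R x \<in> S) \<and> (\<forall>x\<in>S. \<forall>y\<in>S. sup x y \<in> S)"

definition gen_riesz :: "'g::riesz_space set \<Rightarrow> 'g set" where
  "gen_riesz S = \<Inter>{W. riesz_subspace W \<and> S \<subseteq> W}"

definition riesz_hom_on :: "('a \<Rightarrow> real) set \<Rightarrow> (('a \<Rightarrow> real) \<Rightarrow> 'g::riesz_space) \<Rightarrow> bool" where
  "riesz_hom_on D T \<longleftrightarrow>
     (\<forall>f\<in>D. \<forall>g\<in>D. T (\<lambda>x. f x + g x) = T f + T g) \<and>
     (\<forall>c. \<forall>f\<in>D. T (\<lambda>x. c * f x) = c *\<^sub>R T f) \<and>
     (\<forall>f\<in>D. \<forall>g\<in>D. T (\<lambda>x. max (f x) (g x)) = sup (T f) (T g))"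

definition riesz_iso_onto :: "('a \<Rightarrow> real) set \<Rightarrow> 'g::riesz_space set \<Rightarrow> (('a \<Rightarrow> real) \<Rightarrow> 'g) \<Rightarrow> bool" where
  "riesz_iso_onto D W T \<longleftrightarrow> riesz_hom_on D T \<and> bij_betw T D W \<and>
     (\<forall>u\<in>W. \<forall>v\<in>W. inv_into D T (sup u v) = (\<lambda>x. max (inv_into D T u x) (inv_into D T v x)))"

definition bilinear_on :: "('a \<Rightarrow> real) set \<Rightarrow> ('b \<Rightarrow> real) set \<Rightarrow>
    (('a \<Rightarrow> real) \<Rightarrow> ('b \<Rightarrow> real) \<Rightarrow> 'g::real_vector) \<Rightarrow> bool" where
  "bilinear_on E F \<phi> \<longleftrightarrow>
     (\<forall>g\<in>F. \<forall>f1\<in>E. \<forall>f2\<in>E. \<phi> (\<lambda>x. f1 x + f2 x) g = \<phi> f1 g + \<phi> f2 g) \<and>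
     (\<forall>g\<in>F. \<forall>c. \<forall>f\<in>E. \<phi> (\<lambda>x. c * f x) g = c *\<^sub>R \<phi> f g) \<and>
     (\<forall>f\<in>E. \<forall>g1\<in>F. \<forall>g2\<in>F. \<phi> f (\<lambda>y. g1 y + g2 y) = \<phi> f g1 + \<phi> f g2) \<and>
     (\<forall>f\<in>E. \<forall>c. \<forall>g\<in>F. \<phi> f (\<lambda>y. c * g y) = c *\<^sub>R \<phi> f g)"

definition riesz_bimorphism :: "('a \<Rightarrow> real) set \<Rightarrow> ('b \<Rightarrow> real) set \<Rightarrow>
    (('a \<Rightarrow> real) \<Rightarrow> ('b \<Rightarrow> real) \<Rightarrow> 'g::riesz_space) \<Rightarrow> bool" where
  "riesz_bimorphism E F \<phi> \<longleftrightarrow> bilinear_on E F \<phi> \<and>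
     (\<forall>g\<in>F. (\<forall>y. 0 \<le> g y) \<longrightarrow> riesz_hom_on E (\<lambda>f. \<phi> f g)) \<and>
     (\<forall>f\<in>E. (\<forall>x. 0 \<le> f x) \<longrightarrow> riesz_hom_on F (\<lambda>g. \<phi> f g))"

definition bi_injective :: "('a \<Rightarrow> real) set \<Rightarrow> ('b \<Rightarrow> real) set \<Rightarrow>
    (('a \<Rightarrow> real) \<Rightarrow> ('b \<Rightarrow> real) \<Rightarrow> 'g::zero) \<Rightarrow> bool" where
  "bi_injective E F \<phi> \<longleftrightarrow>
     (\<forall>f\<in>E. \<forall>g\<in>F. \<phi> f g = 0 \<longrightarrow> f = (\<lambda>x. 0) \<or> g = (\<lambda>y. 0))"

definition sup_dense :: "('a::topological_space \<Rightarrow> real) set \<Rightarrow> bool" where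
  "sup_dense E \<longleftrightarrow> (\<forall>f\<in>cfun. \<forall>e>0. \<exists>g\<in>E. \<forall>x. \<bar>f x - g x\<bar> < e)"

definition chi :: "('a \<Rightarrow> real) \<Rightarrow> ('b \<Rightarrow> real) \<Rightarrow> ('a \<times> 'b \<Rightarrow> real)" where
  "chi f g = (\<lambda>(x, y). f x * g y)"

end

theory Submission
  imports Defs "HOL-Library.Lattice_Algebras"
begin

text \<open>
  Write \<open>u = \<phi>(1, 1)\<close>. A Riesz homomorphism \<open>T\<close> with \<open>\<phi> = T \<circ> \<chi>\<close> is determined on the
  Riesz subspace generated by the products \<open>\<chi>(f, g)\<close>, so everything rests on showing that the
  Riesz subspace of \<open>C(X \<times> Y) \<times> G\<close> generated by the pairs \<open>(\<chi>(f, g), \<phi>(f, g))\<close> is the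
  graph of a function, i.e. that \<open>h \<le> 0\<close> implies \<open>z \<le> 0\<close> for every pair \<open>(h, z)\<close> in it.

  By induction over the generation, every such pair is controlled by finite sets \<open>A \<subseteq> E\<close>,
  \<open>B \<subseteq> F\<close> and a constant \<open>K\<close>: \<open>h\<close> is \<open>K\<close>-Lipschitz for the pseudometrics defined by \<open>A\<close>
  and \<open>B\<close>, and whenever \<open>a\<close>, \<open>b\<close> are cells on whose supports the functions of \<open>A\<close> and \<open>B\<close>
  stay \<open>\<delta>\<close>-close to their values at \<open>x\<^sub>0\<close> and \<open>y\<^sub>0\<close>, then
  \<open>inf |z - h(x\<^sub>0, y\<^sub>0) u| (C \<phi>(a, b)) \<le> K \<delta> \<phi>(a', b')\<close> for all \<open>C \<ge> 0\<close>, where \<open>a'\<close>,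
  \<open>b'\<close> are plateaus equal to \<open>1\<close> on the supports of \<open>a\<close>, \<open>b\<close>. For a single product this follows
  from the bimorphism property and the disjointness of \<open>b\<close> and \<open>1 - b'\<close>; the lattice-linear
  operations preserve it. Covering \<open>X\<close> and \<open>Y\<close> by such cells whose plateaus overlap at most
  \<open>4\<^bsup>|A|\<^esup>\<close> and \<open>4\<^bsup>|B|\<^esup>\<close> times, independently of \<open>\<delta>\<close>, and summing the local
  estimates gives \<open>z\<^sup>+ \<le> \<delta> K 4\<^bsup>|A|\<^esup> 4\<^bsup>|B|\<^esup> u\<close> for all \<open>\<delta> > 0\<close>, so \<open>z\<^sup>+ = 0\<close>
  as \<open>G\<close> is Archimedean.

  If \<open>\<phi>\<close> is bi-injective and \<open>(h, 0)\<close> lies in the graph with \<open>h(x\<^sub>0, y\<^sub>0) \<noteq> 0\<close>, the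
  Lipschitz bound yields cells \<open>a\<close>, \<open>b\<close> with \<open>a(x\<^sub>0), b(y\<^sub>0) > 0\<close> and \<open>\<chi>(a, b) \<le> c |h|\<close>,
  hence \<open>\<phi>(a, b) \<le> 0\<close>, which bi-injectivity forbids.
\<close>

section \<open>Riesz spaces\<close>

context riesz_space
begin
subclass lattice_ab_group_add ..
end

definition riesz_abs :: "'g::riesz_space \<Rightarrow> 'g" where
  "riesz_abs x = sup x (- x)"

interpretation riesz: lattice_ab_group_add_abs riesz_abs "(+)" "0 :: 'g::riesz_space" "(-)" uminus
    "(\<le>)" "(<)" inf sup
  by unfold_locales (simp add: riesz_abs_def)

lemma scaleR_sup:
  fixes a b :: "'g::riesz_space"
  assumes "0 \<le> c"
  shows "c *\<^sub>R sup a b = sup (c *\<^sub>R a) (c *\<^sub>R b)"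
proof (cases "c = 0")
  case False
  with assms have c: "0 < c" by simp
  define s where "s = sup (c *\<^sub>R a) (c *\<^sub>R b)"
  have "a \<le> s /\<^sub>R c" "b \<le> s /\<^sub>R c"
    using c by (simp_all add: pos_le_divideR_eq s_def)
  then have "c *\<^sub>R sup a b \<le> s"
    using c by (simp only: pos_le_divideR_eq[symmetric] sup_least)
  moreover have "s \<le> c *\<^sub>R sup a b"
    using assms by (simp add: s_def scaleR_left_mono)
  ultimately show ?thesis unfolding s_def by (rule order.antisym)
qed simp

lemma scaleR_inf:
  fixes a b :: "'g::riesz_space"
  assumes "0 \<le> c"
  shows "c *\<^sub>R inf a b = inf (c *\<^sub>R a) (c *\<^sub>R b)"
  using scaleR_sup[OF assms, of "- a" "- b"] by (simp only: inf_eq_neg_sup scaleR_minus_right)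

lemma riesz_abs_scaleR: "riesz_abs (c *\<^sub>R x) = \<bar>c\<bar> *\<^sub>R riesz_abs (x::'g::riesz_space)"
proof -
  have nonneg: "riesz_abs (t *\<^sub>R y) = t *\<^sub>R riesz_abs y" if "0 \<le> t" for t and y :: 'g
    using that by (simp add: riesz_abs_def scaleR_sup)
  show ?thesis
  proof (cases "0 \<le> c")
    case False
    then have "riesz_abs (c *\<^sub>R x) = (- c) *\<^sub>R riesz_abs (- x)"
      using nonneg[of "- c" "- x"] by simp
    with False show ?thesis by (simp add: riesz.abs_minus_cancel)
  qed (simp add: nonneg)
qed

lemma inf_add_le:
  fixes a b c :: "'g::riesz_space"
  assumes "0 \<le> a" "0 \<le> b" "0 \<le> c"
  shows "inf a (b + c) \<le> inf a b + inf a c"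
proof -
  let ?d = "inf a (b + c)"
  have "?d - inf a b = sup (?d - a) (?d - b)"
    by (simp add: diff_inf_eq_sup add_sup_distrib_left)
  also have "\<dots> \<le> inf a c"
  proof (rule sup_least)
    have "?d - a \<le> 0" by simp
    also have "0 \<le> inf a c" using assms by simp
    finally show "?d - a \<le> inf a c" .
    have "?d - b \<le> a"
      using assms(2) inf_le1[of a "b + c"] by (simp add: algebra_simps add_increasing2)
    moreover have "?d - b \<le> c"
      using inf_le2[of a "b + c"] by (simp add: algebra_simps)
    ultimately show "?d - b \<le> inf a c" by simp
  qed
  finally show ?thesis by (simp only: diff_le_eq add.commute)
qed

lemma inf_le_inf_add:
  fixes m m1 m2 w :: "'g::riesz_space"
  assumes "m \<le> m1 + m2" "0 \<le> m1" "0 \<le> m2" "0 \<le> w"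
  shows "inf m w \<le> inf m1 w + inf m2 w"
proof -
  have "inf m w \<le> inf w (m1 + m2)" using assms(1) by (simp add: inf_commute le_infI1 le_infI2)
  also have "\<dots> \<le> inf w m1 + inf w m2" using assms(4,2,3) by (rule inf_add_le)
  finally show ?thesis by (simp add: inf_commute)
qed

lemma inf_sum_le:
  fixes a :: "'g::riesz_space"
  assumes "0 \<le> a" and "\<And>i. i \<in> I \<Longrightarrow> 0 \<le> b i"
  shows "inf a (\<Sum>i\<in>I. b i) \<le> (\<Sum>i\<in>I. inf a (b i))"
  using assms(2)
proof (induction I rule: infinite_finite_induct)
  case (insert i I)
  then have "inf a (\<Sum>j\<in>insert i I. b j) \<le> inf a (b i) + inf a (\<Sum>j\<in>I. b j)"
    using assms(1) by (simp add: inf_add_le sum_nonneg)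
  also have "\<dots> \<le> (\<Sum>j\<in>insert i I. inf a (b j))"
    using insert by simp
  finally show ?case .
qed (use assms(1) in simp_all)

lemma inf_double_sum_le:
  fixes w :: "'g::riesz_space"
  assumes "0 \<le> w" and "\<And>j i. j \<in> J \<Longrightarrow> i \<in> I \<Longrightarrow> 0 \<le> W j i"
  shows "inf w (\<Sum>j\<in>J. \<Sum>i\<in>I. W j i) \<le> (\<Sum>j\<in>J. \<Sum>i\<in>I. inf w (W j i))"
proof -
  have "inf w (\<Sum>j\<in>J. \<Sum>i\<in>I. W j i) \<le> (\<Sum>j\<in>J. inf w (\<Sum>i\<in>I. W j i))"
    using assms by (intro inf_sum_le sum_nonneg) auto
  also have "\<dots> \<le> (\<Sum>j\<in>J. \<Sum>i\<in>I. inf w (W j i))"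
    using assms by (intro sum_mono inf_sum_le) auto
  finally show ?thesis .
qed

lemma riesz_abs_sup_diff:
  fixes a b c d :: "'g::riesz_space"
  shows "riesz_abs (sup a b - sup c d) \<le> riesz_abs (a - c) + riesz_abs (b - d)"
proof -
  have le: "sup a b \<le> sup c d + (riesz_abs (a - c) + riesz_abs (b - d))" for a b c d :: 'g
  proof (rule sup_least)
    have "a \<le> c + riesz_abs (a - c)"
      using riesz.abs_ge_self[of "a - c"] by (simp add: algebra_simps)
    also have "\<dots> \<le> sup c d + (riesz_abs (a - c) + riesz_abs (b - d))"
      by (intro add_mono) (simp_all add: riesz.abs_ge_zero)
    finally show "a \<le> sup c d + (riesz_abs (a - c) + riesz_abs (b - d))" .
    have "b \<le> d + riesz_abs (b - d)"
      using riesz.abs_ge_self[of "b - d"] by (simp add: algebra_simps)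
    also have "\<dots> \<le> sup c d + (riesz_abs (a - c) + riesz_abs (b - d))"
      by (intro add_mono) (simp_all add: riesz.abs_ge_zero)
    finally show "b \<le> sup c d + (riesz_abs (a - c) + riesz_abs (b - d))" .
  qed
  have "sup a b - sup c d \<le> riesz_abs (a - c) + riesz_abs (b - d)"
    using le[of a b c d] by (simp only: diff_le_eq add.commute)
  moreover have "- (sup a b - sup c d) \<le> riesz_abs (a - c) + riesz_abs (b - d)"
    using le[of c d a b]
    by (simp only: minus_diff_eq diff_le_eq add.commute riesz.abs_minus_commute[of c a]
        riesz.abs_minus_commute[of d b])
  ultimately show ?thesis by (rule riesz.abs_leI)
qed

lemma max_scaleR_nonneg:
  fixes u :: "'g::riesz_space"
  assumes "0 \<le> u"
  shows "max s t *\<^sub>R u = sup (s *\<^sub>R u) (t *\<^sub>R u)"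
  using assms by (auto simp: max_def sup_absorb1 sup_absorb2 scaleR_right_mono)

lemma archimedean_le_scaleR:
  fixes x y :: "'g::archimedean_riesz_space"
  assumes "0 \<le> x" and "\<And>\<epsilon>. 0 < \<epsilon> \<Longrightarrow> x \<le> \<epsilon> *\<^sub>R y"
  shows "x = 0"
proof (rule archimedean[OF assms(1)], intro allI)
  fix n :: nat
  show "real n *\<^sub>R x \<le> y"
  proof (cases "n = 0")
    case True
    then show ?thesis using assms(2)[of 1] assms(1) by simp
  next
    case False
    then have "real n *\<^sub>R x \<le> real n *\<^sub>R ((1 / real n) *\<^sub>R y)"
      by (intro scaleR_left_mono assms(2)) simp_all
    with False show ?thesis by simp
  qed
qed

section \<open>Riesz subspaces and Riesz homomorphisms of function spaces\<close>

lemma riesz_subspace_fun_zero: "riesz_subspace_fun S \<Longrightarrow> (\<lambda>x. 0) \<in> S"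
  and riesz_subspace_fun_add: "riesz_subspace_fun S \<Longrightarrow> f \<in> S \<Longrightarrow> g \<in> S \<Longrightarrow> (\<lambda>x. f x + g x) \<in> S"
  and riesz_subspace_fun_scale: "riesz_subspace_fun S \<Longrightarrow> f \<in> S \<Longrightarrow> (\<lambda>x. c * f x) \<in> S"
  and riesz_subspace_fun_max:
    "riesz_subspace_fun S \<Longrightarrow> f \<in> S \<Longrightarrow> g \<in> S \<Longrightarrow> (\<lambda>x. max (f x) (g x)) \<in> S"
  by (simp_all add: riesz_subspace_fun_def)

lemma riesz_subspace_fun_uminus: "riesz_subspace_fun S \<Longrightarrow> f \<in> S \<Longrightarrow> (\<lambda>x. - f x) \<in> S"
  using riesz_subspace_fun_scale[of S f "- 1"] by simp

lemma riesz_subspace_fun_diff: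
  "riesz_subspace_fun S \<Longrightarrow> f \<in> S \<Longrightarrow> g \<in> S \<Longrightarrow> (\<lambda>x. f x - g x) \<in> S"
  using riesz_subspace_fun_add[of S f "\<lambda>x. - g x"] riesz_subspace_fun_uminus[of S g] by simp

lemma riesz_subspace_fun_divide: "riesz_subspace_fun S \<Longrightarrow> f \<in> S \<Longrightarrow> (\<lambda>x. f x / c) \<in> S"
  using riesz_subspace_fun_scale[of S f "1 / c"] by simp

lemma riesz_subspace_fun_min:
  assumes "riesz_subspace_fun S" "f \<in> S" "g \<in> S"
  shows "(\<lambda>x. min (f x) (g x)) \<in> S"
proof -
  have "(\<lambda>x. - max (- f x) (- g x)) \<in> S"
    using assms by (intro riesz_subspace_fun_uminus riesz_subspace_fun_max)
  moreover have "(\<lambda>x. - max (- f x) (- g x)) = (\<lambda>x. min (f x) (g x))"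
    by (auto simp: fun_eq_iff)
  ultimately show ?thesis by simp
qed

lemma riesz_subspace_fun_abs:
  assumes "riesz_subspace_fun S" "f \<in> S"
  shows "(\<lambda>x. \<bar>f x\<bar>) \<in> S"
proof -
  have "(\<lambda>x. max (f x) (- f x)) \<in> S"
    using assms by (intro riesz_subspace_fun_max riesz_subspace_fun_uminus)
  moreover have "(\<lambda>x. max (f x) (- f x)) = (\<lambda>x. \<bar>f x\<bar>)" by (auto simp: fun_eq_iff)
  ultimately show ?thesis by simp
qed

lemmas riesz_subspace_fun_closed = riesz_subspace_fun_add riesz_subspace_fun_scale
  riesz_subspace_fun_max riesz_subspace_fun_min riesz_subspace_fun_uminus riesz_subspace_fun_diff
  riesz_subspace_fun_divide riesz_subspace_fun_abs

lemma riesz_subspace_fun_sum: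
  assumes "riesz_subspace_fun S" and "\<And>i. i \<in> I \<Longrightarrow> h i \<in> S"
  shows "(\<lambda>x. \<Sum>i\<in>I. h i x) \<in> S"
  using assms(2)
proof (induction I rule: infinite_finite_induct)
  case (insert i I)
  then show ?case using riesz_subspace_fun_add[OF assms(1), of "h i" "\<lambda>x. \<Sum>i\<in>I. h i x"] by simp
qed (simp_all add: riesz_subspace_fun_zero[OF assms(1)])

lemma riesz_subspace_fun_Min:
  assumes "riesz_subspace_fun S" "finite I" "(\<lambda>x. c) \<in> S" "\<And>i. i \<in> I \<Longrightarrow> h i \<in> S"
  shows "(\<lambda>x. Min (insert c ((\<lambda>i. h i x) ` I))) \<in> S"
  using assms(2,4)
proof (induction I rule: finite_induct)
  case (insert i I)
  then have "(\<lambda>x. min (h i x) (Min (insert c ((\<lambda>i. h i x) ` I)))) \<in> S"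
    using assms(1) by (intro riesz_subspace_fun_min) auto
  moreover have "Min (insert c (insert a B)) = min a (Min (insert c B))" if "finite B" for a B
    using that by (simp only: insert_commute[of c a] Min_insert finite_insert insert_not_empty
        simp_thms)
  ultimately show ?case
    using insert.hyps(1) by simp
qed (use assms(3) in simp)

definition linear_fun_on :: "('a \<Rightarrow> real) set \<Rightarrow> (('a \<Rightarrow> real) \<Rightarrow> 'g::real_vector) \<Rightarrow> bool" where
  "linear_fun_on S T \<longleftrightarrow> (\<forall>f\<in>S. \<forall>g\<in>S. T (\<lambda>x. f x + g x) = T f + T g) \<and>
     (\<forall>c. \<forall>f\<in>S. T (\<lambda>x. c * f x) = c *\<^sub>R T f)"

lemma riesz_hom_on_imp_linear_fun_on: "riesz_hom_on S T \<Longrightarrow> linear_fun_on S T"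
  by (simp add: riesz_hom_on_def linear_fun_on_def)

lemma linear_fun_on_add: "linear_fun_on S T \<Longrightarrow> f \<in> S \<Longrightarrow> g \<in> S \<Longrightarrow> T (\<lambda>x. f x + g x) = T f + T g"
  and linear_fun_on_scale: "linear_fun_on S T \<Longrightarrow> f \<in> S \<Longrightarrow> T (\<lambda>x. c * f x) = c *\<^sub>R T f"
  by (simp_all add: linear_fun_on_def)

lemma linear_fun_on_zero: "linear_fun_on S T \<Longrightarrow> riesz_subspace_fun S \<Longrightarrow> T (\<lambda>x. 0) = 0"
  using linear_fun_on_scale[of S T "\<lambda>x. 0" 0] riesz_subspace_fun_zero[of S] by simp

lemma linear_fun_on_uminus: "linear_fun_on S T \<Longrightarrow> f \<in> S \<Longrightarrow> T (\<lambda>x. - f x) = - T f"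
  using linear_fun_on_scale[of S T f "- 1"] by simp

lemma linear_fun_on_diff:
  "linear_fun_on S T \<Longrightarrow> riesz_subspace_fun S \<Longrightarrow> f \<in> S \<Longrightarrow> g \<in> S \<Longrightarrow> T (\<lambda>x. f x - g x) = T f - T g"
  using linear_fun_on_add[of S T f "\<lambda>x. - g x"] linear_fun_on_uminus[of S T g]
    riesz_subspace_fun_uminus[of S g] by simp

lemma linear_fun_on_sum:
  assumes "linear_fun_on S T" "riesz_subspace_fun S" and "\<And>i. i \<in> I \<Longrightarrow> h i \<in> S"
  shows "T (\<lambda>x. \<Sum>i\<in>I. h i x) = (\<Sum>i\<in>I. T (h i))"
  using assms(3)
proof (induction I rule: infinite_finite_induct)
  case (insert i I)
  then show ?case
    using linear_fun_on_add[OF assms(1), of "h i" "\<lambda>x. \<Sum>i\<in>I. h i x"]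
      riesz_subspace_fun_sum[OF assms(2), of I h] by simp
qed (simp_all add: linear_fun_on_zero[OF assms(1,2)])

lemma riesz_hom_on_max:
  "riesz_hom_on S T \<Longrightarrow> f \<in> S \<Longrightarrow> g \<in> S \<Longrightarrow> T (\<lambda>x. max (f x) (g x)) = sup (T f) (T g)"
  by (simp add: riesz_hom_on_def)

lemma riesz_hom_on_min:
  assumes T: "riesz_hom_on S T" and S: "riesz_subspace_fun S" and "f \<in> S" "g \<in> S"
  shows "T (\<lambda>x. min (f x) (g x)) = inf (T f) (T g)"
proof -
  note lin = riesz_hom_on_imp_linear_fun_on[OF T]
  have "(\<lambda>x. min (f x) (g x)) = (\<lambda>x. - max (- f x) (- g x))" by (auto simp: fun_eq_iff)
  then have "T (\<lambda>x. min (f x) (g x)) = - sup (- T f) (- T g)"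
    using assms by (simp add: linear_fun_on_uminus[OF lin] riesz_hom_on_max[OF T]
        riesz_subspace_fun_max riesz_subspace_fun_uminus)
  then show ?thesis by (simp only: inf_eq_neg_sup)
qed

lemma riesz_hom_on_abs:
  assumes T: "riesz_hom_on S T" and S: "riesz_subspace_fun S" and f: "f \<in> S"
  shows "T (\<lambda>x. \<bar>f x\<bar>) = riesz_abs (T f)"
proof -
  have "(\<lambda>x. \<bar>f x\<bar>) = (\<lambda>x. max (f x) (- f x))" by (auto simp: fun_eq_iff)
  then show ?thesis
    using riesz_hom_on_max[OF T f riesz_subspace_fun_uminus[OF S f]]
      linear_fun_on_uminus[OF riesz_hom_on_imp_linear_fun_on[OF T] f]
    by (simp add: riesz_abs_def)
qed

lemma riesz_hom_on_mono:
  assumes T: "riesz_hom_on S T" and S: "riesz_subspace_fun S" and "f \<in> S" "g \<in> S"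
    and le: "\<And>x. f x \<le> g x"
  shows "T f \<le> T g"
proof -
  note lin = riesz_hom_on_imp_linear_fun_on[OF T]
  have "(\<lambda>x. max (g x - f x) 0) = (\<lambda>x. g x - f x)" using le by (simp add: fun_eq_iff)
  then have "T (\<lambda>x. g x - f x) = sup (T (\<lambda>x. g x - f x)) 0"
    using assms riesz_hom_on_max[OF T, of "\<lambda>x. g x - f x" "\<lambda>x. 0"] linear_fun_on_zero[OF lin S]
    by (simp add: riesz_subspace_fun_diff riesz_subspace_fun_zero)
  then have "0 \<le> T (\<lambda>x. g x - f x)" by (metis sup.cobounded2)
  then show ?thesis using assms by (simp add: linear_fun_on_diff[OF lin])
qed

lemma riesz_hom_on_nonneg:
  "riesz_hom_on S T \<Longrightarrow> riesz_subspace_fun S \<Longrightarrow> f \<in> S \<Longrightarrow> (\<And>x. 0 \<le> f x) \<Longrightarrow> 0 \<le> T f"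
  using riesz_hom_on_mono[of S T "\<lambda>x. 0" f] riesz_subspace_fun_zero[of S]
    linear_fun_on_zero[OF riesz_hom_on_imp_linear_fun_on] by fastforce

section \<open>Covering by cells\<close>

lemma sum_pos_imp_ex_pos: "0 < sum f J \<Longrightarrow> \<exists>j\<in>J. 0 < (f j :: 'a::linordered_ab_group_add)"
  by (meson not_less sum_nonpos)

definition tent :: "real \<Rightarrow> real" where
  "tent t = max 0 (1 - \<bar>t\<bar>)"

definition plateau :: "real \<Rightarrow> real" where
  "plateau t = min 1 (max 0 (2 - \<bar>t\<bar>))"

lemma tent_plateau:
  shows "0 \<le> tent t" "tent t \<le> 1" "0 \<le> plateau t" "plateau t \<le> 1"
    and "0 < tent t \<Longrightarrow> \<bar>t\<bar> < 1" "0 < tent t \<Longrightarrow> plateau t = 1"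
    and "\<bar>t\<bar> \<le> 1/2 \<Longrightarrow> 1/2 \<le> tent t" "2 \<le> \<bar>t\<bar> \<Longrightarrow> plateau t = 0"
  by (auto simp: tent_def plateau_def)

lemma riesz_subspace_fun_tent_plateau:
  assumes "riesz_subspace_fun S" "\<And>c. (\<lambda>x. c) \<in> S" "f \<in> S"
  shows "(\<lambda>x. tent (f x / d - j)) \<in> S" "(\<lambda>x. plateau (f x / d - j)) \<in> S"
  unfolding tent_def plateau_def using assms by (intro riesz_subspace_fun_closed; simp)+

text \<open>\<open>a'\<close> stands in for the indicator function of the support of \<open>a\<close>, which need not
  lie in \<open>S\<close>.\<close>
definition cell_pair :: "('a \<Rightarrow> real) set \<Rightarrow> ('a \<Rightarrow> real) \<Rightarrow> ('a \<Rightarrow> real) \<Rightarrow> bool" where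
  "cell_pair S a a' \<longleftrightarrow> a \<in> S \<and> a' \<in> S \<and>
     (\<forall>x. 0 \<le> a x \<and> a x \<le> 1 \<and> 0 \<le> a' x \<and> a' x \<le> 1 \<and> (0 < a x \<longrightarrow> a' x = 1))"

definition small_on_support :: "('a \<Rightarrow> real) set \<Rightarrow> real \<Rightarrow> ('a \<Rightarrow> real) \<Rightarrow> bool" where
  "small_on_support A \<delta> a \<longleftrightarrow> (\<forall>x x'. 0 < a x \<longrightarrow> 0 < a x' \<longrightarrow> (\<forall>f\<in>A. \<bar>f x - f x'\<bar> \<le> \<delta>))"

definition centered_cell :: "('a \<Rightarrow> real) set \<Rightarrow> ('a \<Rightarrow> real) set \<Rightarrow> real \<Rightarrow>
    ('a \<Rightarrow> real) \<Rightarrow> ('a \<Rightarrow> real) \<Rightarrow> 'a \<Rightarrow> bool" where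
  "centered_cell S A \<delta> a a' x0 \<longleftrightarrow> cell_pair S a a' \<and> (\<forall>x. 0 < a x \<longrightarrow> (\<forall>f\<in>A. \<bar>f x - f x0\<bar> \<le> \<delta>))"

lemma centered_cellI:
  assumes "cell_pair S a a'" "small_on_support A \<delta> a"
  shows "centered_cell S A \<delta> a a' (SOME x. 0 < a x)"
  unfolding centered_cell_def
proof (intro conjI assms(1) allI impI)
  fix x assume "0 < a x"
  then have "0 < a (SOME x. 0 < a x)" by (rule someI)
  with \<open>0 < a x\<close> assms(2) show "\<forall>f\<in>A. \<bar>f x - f (SOME x. 0 < a x)\<bar> \<le> \<delta>"
    unfolding small_on_support_def by blast
qed

lemma centered_cell_mono: "centered_cell S A \<delta> a a' x0 \<Longrightarrow> A' \<subseteq> A \<Longrightarrow> centered_cell S A' \<delta> a a' x0"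
  unfolding centered_cell_def by blast

definition grid_tent :: "('a \<Rightarrow> real) set \<Rightarrow> real \<Rightarrow> (('a \<Rightarrow> real) \<Rightarrow> int) \<Rightarrow> 'a \<Rightarrow> real" where
  "grid_tent A d j x = Min (insert 1 ((\<lambda>f. tent (f x / d - j f)) ` A))"

definition grid_plateau :: "('a \<Rightarrow> real) set \<Rightarrow> real \<Rightarrow> (('a \<Rightarrow> real) \<Rightarrow> int) \<Rightarrow> 'a \<Rightarrow> real" where
  "grid_plateau A d j x = Min (insert 1 ((\<lambda>f. plateau (f x / d - j f)) ` A))"

lemma grid_tent_pos_iff: "finite A \<Longrightarrow> 0 < grid_tent A d j x \<longleftrightarrow> (\<forall>f\<in>A. 0 < tent (f x / d - j f))"
  by (simp add: grid_tent_def)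

lemma grid_cell_pair:
  assumes S: "riesz_subspace_fun S" "\<And>c. (\<lambda>x. c) \<in> S" and A: "finite A" "A \<subseteq> S"
  shows "cell_pair S (grid_tent A d j) (grid_plateau A d j)"
proof -
  have "grid_tent A d j \<in> S" "grid_plateau A d j \<in> S"
    unfolding grid_tent_def grid_plateau_def using A
    by (auto intro!: riesz_subspace_fun_Min S riesz_subspace_fun_tent_plateau)
  moreover have "0 < grid_tent A d j x \<Longrightarrow> grid_plateau A d j x = 1" for x
    using A(1) by (auto simp: grid_tent_pos_iff grid_plateau_def tent_plateau intro!: Min_eqI)
  ultimately show ?thesis
    using A(1) by (auto simp: cell_pair_def grid_tent_def grid_plateau_def tent_plateau)
qed

lemma small_on_support_grid_tent:
  assumes "finite A" "0 < d"
  shows "small_on_support A (2 * d) (grid_tent A d j)"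
  unfolding small_on_support_def
proof (intro allI impI ballI)
  fix x x' f assume "0 < grid_tent A d j x" "0 < grid_tent A d j x'" "f \<in> A"
  then have "\<bar>f x / d - j f\<bar> < 1" "\<bar>f x' / d - j f\<bar> < 1"
    using assms(1) by (simp_all add: grid_tent_pos_iff tent_plateau)
  then have "\<bar>f x / d - f x' / d\<bar> < 2" by linarith
  then have "\<bar>f x - f x'\<bar> / d < 2"
    using assms(2) by (simp add: diff_divide_distrib[symmetric])
  then show "\<bar>f x - f x'\<bar> \<le> 2 * d" using assms(2) by (simp add: divide_less_eq)
qed

lemma sum_grid_tent_ge:
  assumes A: "finite A" and N: "\<And>f. f \<in> A \<Longrightarrow> \<bar>f x / d\<bar> \<le> of_int N"
  shows "1/2 \<le> (\<Sum>j\<in>(\<Pi>\<^sub>E f\<in>A. {-N..N}). grid_tent A d j x)"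
proof -
  define j0 where "j0 = (\<lambda>f\<in>A. round (f x / d))"
  have "round (f x / d) \<in> {-N..N}" if "f \<in> A" for f
    using of_int_round_abs_le[of "f x / d"] N[OF that] unfolding atLeastAtMost_iff by linarith
  then have "j0 \<in> (\<Pi>\<^sub>E f\<in>A. {-N..N})" by (simp add: j0_def)
  moreover have "1/2 \<le> tent (f x / d - j0 f)" if "f \<in> A" for f
    using that of_int_round_abs_le[of "f x / d"]
    by (intro tent_plateau(7)) (simp add: j0_def abs_minus_commute)
  then have "1/2 \<le> grid_tent A d j0 x"
    unfolding grid_tent_def using A by (intro Min.boundedI) auto
  moreover have "0 \<le> grid_tent A d j x" for j
    using A by (simp add: grid_tent_def tent_plateau)
  ultimately show ?thesis
    using A by (meson finite_PiE finite_atLeastAtMost_int member_le_sum order.trans)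
qed

lemma sum_grid_plateau_le:
  assumes A: "finite A"
  shows "(\<Sum>j\<in>(\<Pi>\<^sub>E f\<in>A. {-N..N}). grid_plateau A d j x) \<le> 4 ^ card A"
proof -
  define J where "J = (\<Pi>\<^sub>E f\<in>A. {-N..N})"
  define W where "W = (\<Pi>\<^sub>E f\<in>A. {\<lfloor>f x / d\<rfloor> - 1 .. \<lfloor>f x / d\<rfloor> + 2})"
  have "finite J" using A by (simp add: J_def finite_PiE)
  have "grid_plateau A d j x = 0" if "j \<in> J - W" for j
  proof -
    from that obtain f where f: "f \<in> A" "j f \<notin> {\<lfloor>f x / d\<rfloor> - 1 .. \<lfloor>f x / d\<rfloor> + 2}"
      by (auto simp: J_def W_def PiE_iff)
    then have "2 \<le> \<bar>f x / d - j f\<bar>"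
      by (auto simp: abs_if) linarith+
    then have "plateau (f x / d - j f) = 0" by (rule tent_plateau)
    then show ?thesis
      using A f(1) by (auto simp: grid_plateau_def tent_plateau intro!: Min_eqI)
  qed
  then have "(\<Sum>j\<in>J. grid_plateau A d j x) = (\<Sum>j\<in>J \<inter> W. grid_plateau A d j x)"
    using \<open>finite J\<close> by (intro sum.mono_neutral_right) auto
  also have "\<dots> \<le> (\<Sum>j\<in>J \<inter> W. 1)"
    using A by (intro sum_mono) (simp add: grid_plateau_def tent_plateau)
  also have "\<dots> \<le> card W"
    using A by (simp add: W_def card_mono finite_PiE)
  also have "card W = 4 ^ card A"
    using A by (simp add: W_def card_PiE)
  finally show ?thesis by (simp add: J_def)
qed

lemma cover_by_cells:
  fixes A :: "('a \<Rightarrow> real) set"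
  assumes S: "riesz_subspace_fun S" "\<And>c. (\<lambda>x. c) \<in> S"
    and A: "finite A" "A \<subseteq> S" and M: "\<And>f x. f \<in> A \<Longrightarrow> \<bar>f x\<bar> \<le> M" and \<delta>: "0 < \<delta>"
  obtains J :: "(('a \<Rightarrow> real) \<Rightarrow> int) set" and a a'
  where "finite J" "\<And>j. j \<in> J \<Longrightarrow> cell_pair S (a j) (a' j)" "\<And>j. j \<in> J \<Longrightarrow> small_on_support A \<delta> (a j)"
    "\<And>x. 1/2 \<le> (\<Sum>j\<in>J. a j x)" "\<And>x. (\<Sum>j\<in>J. a' j x) \<le> 4 ^ card A"
proof
  define d where "d = \<delta> / 2"
  have d: "0 < d" using \<delta> by (simp add: d_def)
  have bound: "\<bar>f x / d\<bar> \<le> of_int \<lceil>M / d\<rceil>" if "f \<in> A" for f x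
    using order.trans[OF divide_right_mono[OF M[OF that, of x] less_imp_le[OF d]] le_of_int_ceiling]
      d
    by (simp add: abs_divide)
  show "finite (\<Pi>\<^sub>E f\<in>A. {-\<lceil>M / d\<rceil>..\<lceil>M / d\<rceil>})" using A(1) by (simp add: finite_PiE)
  show "cell_pair S (grid_tent A d j) (grid_plateau A d j)" for j
    by (rule grid_cell_pair[OF S A])
  show "small_on_support A \<delta> (grid_tent A d j)" for j
    using small_on_support_grid_tent[OF A(1) d] by (simp add: d_def)
  show "1/2 \<le> (\<Sum>j\<in>(\<Pi>\<^sub>E f\<in>A. {-\<lceil>M / d\<rceil>..\<lceil>M / d\<rceil>}). grid_tent A d j x)" for x
    using sum_grid_tent_ge[OF A(1) bound] .
  show "(\<Sum>j\<in>(\<Pi>\<^sub>E f\<in>A. {-\<lceil>M / d\<rceil>..\<lceil>M / d\<rceil>}). grid_plateau A d j x) \<le> 4 ^ card A" for x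
    by (rule sum_grid_plateau_le[OF A(1)])
qed

section \<open>Riesz bimorphisms on spaces of bounded functions\<close>

locale bounded_riesz_bimorphism =
  fixes E :: "('x \<Rightarrow> real) set" and F :: "('y \<Rightarrow> real) set"
    and \<phi> :: "('x \<Rightarrow> real) \<Rightarrow> ('y \<Rightarrow> real) \<Rightarrow> 'g::archimedean_riesz_space"
  assumes E: "riesz_subspace_fun E" and F: "riesz_subspace_fun F"
    and E_const: "\<And>c. (\<lambda>x. c) \<in> E" and F_const: "\<And>c. (\<lambda>y. c) \<in> F"
    and E_bounded: "\<And>f. f \<in> E \<Longrightarrow> bounded (range f)"
    and F_bounded: "\<And>g. g \<in> F \<Longrightarrow> bounded (range g)"
    and bimorphism: "riesz_bimorphism E F \<phi>"
begin

abbreviation u :: 'g where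
  "u \<equiv> \<phi> (\<lambda>x. 1) (\<lambda>y. 1)"

lemma swap: "bounded_riesz_bimorphism F E (\<lambda>g f. \<phi> f g)"
  using E F E_const F_const E_bounded F_bounded bimorphism
  unfolding bounded_riesz_bimorphism_def riesz_bimorphism_def bilinear_on_def by blast

lemma linear_left: "g \<in> F \<Longrightarrow> linear_fun_on E (\<lambda>f. \<phi> f g)"
  and linear_right: "f \<in> E \<Longrightarrow> linear_fun_on F (\<phi> f)"
  using bimorphism unfolding riesz_bimorphism_def bilinear_on_def linear_fun_on_def by blast+

lemma hom_left: "g \<in> F \<Longrightarrow> (\<And>y. 0 \<le> g y) \<Longrightarrow> riesz_hom_on E (\<lambda>f. \<phi> f g)"
  and hom_right: "f \<in> E \<Longrightarrow> (\<And>x. 0 \<le> f x) \<Longrightarrow> riesz_hom_on F (\<phi> f)"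
  using bimorphism unfolding riesz_bimorphism_def by blast+

lemma phi_nonneg: "f \<in> E \<Longrightarrow> g \<in> F \<Longrightarrow> (\<And>x. 0 \<le> f x) \<Longrightarrow> (\<And>y. 0 \<le> g y) \<Longrightarrow> 0 \<le> \<phi> f g"
  using riesz_hom_on_nonneg[OF hom_left E] by blast

lemma phi_mono_left:
  "g \<in> F \<Longrightarrow> (\<And>y. 0 \<le> g y) \<Longrightarrow> f1 \<in> E \<Longrightarrow> f2 \<in> E \<Longrightarrow> (\<And>x. f1 x \<le> f2 x) \<Longrightarrow> \<phi> f1 g \<le> \<phi> f2 g"
  using riesz_hom_on_mono[OF hom_left E, of g f1 f2] by blast

lemma phi_mono_right:
  "f \<in> E \<Longrightarrow> (\<And>x. 0 \<le> f x) \<Longrightarrow> g1 \<in> F \<Longrightarrow> g2 \<in> F \<Longrightarrow> (\<And>y. g1 y \<le> g2 y) \<Longrightarrow> \<phi> f g1 \<le> \<phi> f g2"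
  using riesz_hom_on_mono[OF hom_right F, of f g1 g2] by blast

lemma phi_const_left: "g \<in> F \<Longrightarrow> \<phi> (\<lambda>x. c) g = c *\<^sub>R \<phi> (\<lambda>x. 1) g"
  using linear_fun_on_scale[OF linear_left E_const, of g c 1] by simp

lemma phi_const_right: "f \<in> E \<Longrightarrow> \<phi> f (\<lambda>y. c) = c *\<^sub>R \<phi> f (\<lambda>y. 1)"
  using linear_fun_on_scale[OF linear_right F_const, of f c 1] by simp

lemma phi_const_const: "\<phi> (\<lambda>x. c) (\<lambda>y. d) = (c * d) *\<^sub>R u"
  using phi_const_left[OF F_const, of c d] phi_const_right[OF E_const, of 1 d] by simp

lemma u_nonneg: "0 \<le> u"
  by (rule phi_nonneg) (simp_all add: E_const F_const)

lemma phi_sum_sum: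
  assumes "\<And>i. i \<in> I \<Longrightarrow> a i \<in> E" "\<And>j. j \<in> J \<Longrightarrow> b j \<in> F"
  shows "(\<Sum>i\<in>I. \<Sum>j\<in>J. \<phi> (a i) (b j)) = \<phi> (\<lambda>x. \<Sum>i\<in>I. a i x) (\<lambda>y. \<Sum>j\<in>J. b j y)"
proof -
  have "(\<Sum>i\<in>I. \<Sum>j\<in>J. \<phi> (a i) (b j)) = (\<Sum>i\<in>I. \<phi> (a i) (\<lambda>y. \<Sum>j\<in>J. b j y))"
    using assms by (simp add: linear_fun_on_sum[OF linear_right F])
  also have "\<dots> = \<phi> (\<lambda>x. \<Sum>i\<in>I. a i x) (\<lambda>y. \<Sum>j\<in>J. b j y)"
    using assms by (simp add: linear_fun_on_sum[OF linear_left E] riesz_subspace_fun_sum[OF F])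
  finally show ?thesis .
qed

lemma phi_abs_le: "f \<in> E \<Longrightarrow> g \<in> F \<Longrightarrow> riesz_abs (\<phi> f g) \<le> \<phi> (\<lambda>x. \<bar>f x\<bar>) (\<lambda>y. \<bar>g y\<bar>)"
proof -
  assume f: "f \<in> E" and g: "g \<in> F"
  define gp where "gp = (\<lambda>y. max (g y) 0)"
  define gn where "gn = (\<lambda>y. max (- g y) 0)"
  have F_gp: "gp \<in> F" and F_gn: "gn \<in> F"
    unfolding gp_def gn_def using F F_const g by (intro riesz_subspace_fun_closed; simp)+
  have "g = (\<lambda>y. gp y - gn y)" "(\<lambda>y. \<bar>g y\<bar>) = (\<lambda>y. gp y + gn y)"
    by (auto simp: gp_def gn_def fun_eq_iff)
  then have "\<phi> f g = \<phi> f gp - \<phi> f gn"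
    "\<phi> (\<lambda>x. \<bar>f x\<bar>) (\<lambda>y. \<bar>g y\<bar>) = \<phi> (\<lambda>x. \<bar>f x\<bar>) gp + \<phi> (\<lambda>x. \<bar>f x\<bar>) gn"
    using F_gp F_gn f by (simp_all add: linear_fun_on_diff[OF linear_right F]
        linear_fun_on_add[OF linear_right] riesz_subspace_fun_abs[OF E])
  moreover have "riesz_abs (\<phi> f gp - \<phi> f gn) \<le> riesz_abs (\<phi> f gp) + riesz_abs (\<phi> f gn)"
    using riesz.abs_triangle_ineq4 .
  moreover have "riesz_abs (\<phi> f gp) = \<phi> (\<lambda>x. \<bar>f x\<bar>) gp" "riesz_abs (\<phi> f gn) = \<phi> (\<lambda>x. \<bar>f x\<bar>) gn"
    using F_gp F_gn f by (simp_all add: riesz_hom_on_abs[OF hom_left E] gp_def gn_def)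
  ultimately show ?thesis by simp
qed

lemma phi_disjoint_right:
  assumes "f1 \<in> E" "f2 \<in> E" "\<And>x. 0 \<le> f1 x" "\<And>x. 0 \<le> f2 x"
    and "g1 \<in> F" "g2 \<in> F" "\<And>y. 0 \<le> g1 y" "\<And>y. 0 \<le> g2 y" and disj: "\<And>y. min (g1 y) (g2 y) = 0"
  shows "inf (\<phi> f1 g1) (\<phi> f2 g2) = 0"
proof (rule order.antisym)
  let ?f = "\<lambda>x. f1 x + f2 x"
  have f: "?f \<in> E" "\<And>x. 0 \<le> ?f x" using assms by (simp_all add: riesz_subspace_fun_add[OF E])
  have "inf (\<phi> f1 g1) (\<phi> f2 g2) \<le> inf (\<phi> ?f g1) (\<phi> ?f g2)"
    using assms f by (intro inf_mono phi_mono_left) auto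
  also have "\<dots> = \<phi> ?f (\<lambda>y. min (g1 y) (g2 y))"
    by (rule riesz_hom_on_min[OF hom_right[OF f] F assms(5,6), symmetric])
  also have "\<dots> = 0"
    using f by (simp add: disj linear_fun_on_zero[OF linear_right F])
  finally show "inf (\<phi> f1 g1) (\<phi> f2 g2) \<le> 0" .
  show "0 \<le> inf (\<phi> f1 g1) (\<phi> f2 g2)" using assms by (simp add: phi_nonneg)
qed

lemma inf_phi_localize:
  assumes k: "k \<in> E" "\<And>x. 0 \<le> k x" and c: "c \<in> E" "\<And>x. 0 \<le> c x" and b: "cell_pair F b b'"
  shows "inf (\<phi> k (\<lambda>y. 1)) (\<phi> c b) \<le> \<phi> (\<lambda>x. min (k x) (c x)) b'"
proof -
  define nb where "nb y = 1 - b' y" for y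
  have b_F: "b \<in> F" "b' \<in> F"
    and b01: "\<And>y. 0 \<le> b y \<and> b y \<le> 1 \<and> 0 \<le> b' y \<and> b' y \<le> 1 \<and> (0 < b y \<longrightarrow> b' y = 1)"
    using b by (auto simp: cell_pair_def)
  have nb: "nb \<in> F" "\<And>y. 0 \<le> nb y"
    unfolding nb_def using F F_const b_F b01 by (simp_all add: riesz_subspace_fun_diff)
  have "(\<lambda>y. b' y + nb y) = (\<lambda>y. 1)" by (simp add: nb_def)
  then have "\<phi> k (\<lambda>y. 1) = \<phi> k b' + \<phi> k nb"
    using linear_fun_on_add[OF linear_right[OF k(1)] b_F(2) nb(1)] by simp
  then have "inf (\<phi> k (\<lambda>y. 1)) (\<phi> c b) \<le> inf (\<phi> k b') (\<phi> c b) + inf (\<phi> k nb) (\<phi> c b)"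
    using k nb c b_F b01 by (simp add: inf_le_inf_add phi_nonneg)
  also have "inf (\<phi> k nb) (\<phi> c b) = 0"
  proof (rule phi_disjoint_right)
    show "min (nb y) (b y) = 0" for y
      using b01[of y] by (cases "0 < b y") (auto simp: nb_def)
  qed (use k nb c b_F b01 in simp_all)
  also have "inf (\<phi> k b') (\<phi> c b) \<le> inf (\<phi> k b') (\<phi> c b')"
  proof (intro inf_mono order.refl phi_mono_right)
    show "b y \<le> b' y" for y using b01[of y] by (cases "0 < b y") auto
  qed (use c b_F in simp_all)
  also have "\<dots> = \<phi> (\<lambda>x. min (k x) (c x)) b'"
    using k c b_F b01 by (simp add: riesz_hom_on_min[OF hom_left E])
  finally show ?thesis by simp
qed

lemma inf_phi_oscillation_le:
  assumes f: "f \<in> E" and L: "0 \<le> L" and C: "0 \<le> C" and \<delta>: "0 \<le> \<delta>"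
    and a: "cell_pair E a a'" and b: "cell_pair F b b'" and close: "\<And>x. 0 < a x \<Longrightarrow> \<bar>f x - c\<bar> \<le> \<delta>"
  shows "inf (L *\<^sub>R \<phi> (\<lambda>x. \<bar>f x - c\<bar>) (\<lambda>y. 1)) (C *\<^sub>R \<phi> a b) \<le> (L * \<delta>) *\<^sub>R \<phi> a' b'"
proof -
  define k where "k x = L * \<bar>f x - c\<bar>" for x
  define Ca where "Ca x = C * a x" for x
  have a_E: "a \<in> E" "a' \<in> E" and a01: "\<And>x. 0 \<le> a x \<and> 0 \<le> a' x \<and> (0 < a x \<longrightarrow> a' x = 1)"
    using a by (auto simp: cell_pair_def)
  have b_F: "b \<in> F" "b' \<in> F" and b0: "\<And>y. 0 \<le> b' y"
    using b by (auto simp: cell_pair_def)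
  have fc: "(\<lambda>x. \<bar>f x - c\<bar>) \<in> E"
    using E E_const f by (intro riesz_subspace_fun_closed; simp)+
  have k: "k \<in> E" "\<And>x. 0 \<le> k x"
    unfolding k_def using E fc L by (simp_all add: riesz_subspace_fun_scale)
  have Ca: "Ca \<in> E" "\<And>x. 0 \<le> Ca x"
    unfolding Ca_def using E a_E a01 C by (simp_all add: riesz_subspace_fun_scale)
  have "L *\<^sub>R \<phi> (\<lambda>x. \<bar>f x - c\<bar>) (\<lambda>y. 1) = \<phi> k (\<lambda>y. 1)"
    unfolding k_def by (rule linear_fun_on_scale[OF linear_left[OF F_const] fc, symmetric])
  moreover have "C *\<^sub>R \<phi> a b = \<phi> Ca b"
    unfolding Ca_def using a_E b_F by (simp add: linear_fun_on_scale[OF linear_left])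
  moreover have "inf (\<phi> k (\<lambda>y. 1)) (\<phi> Ca b) \<le> \<phi> (\<lambda>x. min (k x) (Ca x)) b'"
    by (rule inf_phi_localize[OF k Ca b])
  moreover have "\<dots> \<le> \<phi> (\<lambda>x. (L * \<delta>) * a' x) b'"
  proof (rule phi_mono_left)
    show "min (k x) (Ca x) \<le> L * \<delta> * a' x" for x
    proof (cases "0 < a x")
      case True
      then show ?thesis
        using close[OF True] a01[of x] L by (simp add: k_def min.coboundedI1 mult_left_mono)
    next
      case False
      then show ?thesis using a01[of x] L \<delta> by (simp add: Ca_def min.coboundedI2)
    qed
  qed (use b_F b0 k Ca a_E E in \<open>simp_all add: riesz_subspace_fun_min riesz_subspace_fun_scale\<close>)
  moreover have "\<dots> = (L * \<delta>) *\<^sub>R \<phi> a' b'"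
    using a_E b_F by (simp add: linear_fun_on_scale[OF linear_left])
  ultimately show ?thesis by simp
qed

lemma phi_abs_deviation_le:
  assumes f: "f \<in> E" and g: "g \<in> F" and Mg: "\<And>y. \<bar>g y\<bar> \<le> Mg"
  shows "riesz_abs (\<phi> f g - (c * e) *\<^sub>R u)
    \<le> Mg *\<^sub>R \<phi> (\<lambda>x. \<bar>f x - c\<bar>) (\<lambda>y. 1) + \<bar>c\<bar> *\<^sub>R \<phi> (\<lambda>x. 1) (\<lambda>y. \<bar>g y - e\<bar>)"
proof -
  have fc: "(\<lambda>x. f x - c) \<in> E" "(\<lambda>x. \<bar>f x - c\<bar>) \<in> E"
    using E E_const f by (intro riesz_subspace_fun_closed; simp)+
  have ge: "(\<lambda>y. g y - e) \<in> F" "(\<lambda>y. \<bar>g y - e\<bar>) \<in> F"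
    using F F_const g by (intro riesz_subspace_fun_closed; simp)+
  have "\<phi> f g - (c * e) *\<^sub>R u = (\<phi> f g - c *\<^sub>R \<phi> (\<lambda>x. 1) g) + c *\<^sub>R (\<phi> (\<lambda>x. 1) g - e *\<^sub>R u)"
    by (simp add: algebra_simps)
  also have "\<phi> f g - c *\<^sub>R \<phi> (\<lambda>x. 1) g = \<phi> (\<lambda>x. f x - c) g"
    using linear_fun_on_diff[OF linear_left[OF g] E f E_const] phi_const_left[OF g, of c] by simp
  also have "\<phi> (\<lambda>x. 1) g - e *\<^sub>R u = \<phi> (\<lambda>x. 1) (\<lambda>y. g y - e)"
    using linear_fun_on_diff[OF linear_right[OF E_const] F g F_const]
      phi_const_right[OF E_const[of 1], of e]
    by simp
  finally have "\<phi> f g - (c * e) *\<^sub>R u = \<phi> (\<lambda>x. f x - c) g + c *\<^sub>R \<phi> (\<lambda>x. 1) (\<lambda>y. g y - e)" .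
  then have "riesz_abs (\<phi> f g - (c * e) *\<^sub>R u)
      \<le> riesz_abs (\<phi> (\<lambda>x. f x - c) g) + riesz_abs (c *\<^sub>R \<phi> (\<lambda>x. 1) (\<lambda>y. g y - e))"
    by (simp only: riesz.abs_triangle_ineq)
  also have "\<dots> = riesz_abs (\<phi> (\<lambda>x. f x - c) g) + \<bar>c\<bar> *\<^sub>R riesz_abs (\<phi> (\<lambda>x. 1) (\<lambda>y. g y - e))"
    by (simp only: riesz_abs_scaleR)
  also have "\<dots> \<le> Mg *\<^sub>R \<phi> (\<lambda>x. \<bar>f x - c\<bar>) (\<lambda>y. 1) + \<bar>c\<bar> *\<^sub>R \<phi> (\<lambda>x. 1) (\<lambda>y. \<bar>g y - e\<bar>)"
  proof (intro add_mono scaleR_left_mono)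
    have "riesz_abs (\<phi> (\<lambda>x. f x - c) g) \<le> \<phi> (\<lambda>x. \<bar>f x - c\<bar>) (\<lambda>y. \<bar>g y\<bar>)"
      by (rule phi_abs_le[OF fc(1) g])
    also have "\<dots> \<le> \<phi> (\<lambda>x. \<bar>f x - c\<bar>) (\<lambda>y. Mg)"
      using fc g F F_const Mg by (intro phi_mono_right) (simp_all add: riesz_subspace_fun_abs)
    finally show "riesz_abs (\<phi> (\<lambda>x. f x - c) g) \<le> Mg *\<^sub>R \<phi> (\<lambda>x. \<bar>f x - c\<bar>) (\<lambda>y. 1)"
      using phi_const_right[OF fc(2), of Mg] by simp
    show "riesz_abs (\<phi> (\<lambda>x. 1) (\<lambda>y. g y - e)) \<le> \<phi> (\<lambda>x. 1) (\<lambda>y. \<bar>g y - e\<bar>)"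
      using phi_abs_le[OF E_const[of 1] ge(1)] by simp
  qed simp
  finally show ?thesis .
qed

lemma cell_pair_phi_nonneg:
  "cell_pair E a a' \<Longrightarrow> cell_pair F b b' \<Longrightarrow> 0 \<le> \<phi> a b \<and> 0 \<le> \<phi> a' b'"
  unfolding cell_pair_def by (auto intro!: phi_nonneg)

lemma E_uniform_bound: "finite A \<Longrightarrow> A \<subseteq> E \<Longrightarrow> \<exists>M. \<forall>f\<in>A. \<forall>x. \<bar>f x\<bar> \<le> M"
  using bounded_UN[of A range] E_bounded unfolding bounded_iff by fastforce

lemma E_cover:
  assumes "finite A" "A \<subseteq> E" "0 < \<delta>"
  obtains J :: "(('x \<Rightarrow> real) \<Rightarrow> int) set" and a a' x0 where "finite J"
    "\<And>j. j \<in> J \<Longrightarrow> centered_cell E A \<delta> (a j) (a' j) (x0 j)" "\<And>j. j \<in> J \<Longrightarrow> small_on_support A \<delta> (a j)"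
    "\<And>x. 1/2 \<le> (\<Sum>j\<in>J. a j x)" "\<And>x. (\<Sum>j\<in>J. a' j x) \<le> 4 ^ card A"
proof -
  obtain M where M: "\<And>f x. f \<in> A \<Longrightarrow> \<bar>f x\<bar> \<le> M"
    using E_uniform_bound[OF assms(1,2)] by blast
  show thesis
  proof (rule cover_by_cells[of E A M \<delta>])
    fix J :: "(('x \<Rightarrow> real) \<Rightarrow> int) set" and a a'
    assume "finite J" "\<And>j. j \<in> J \<Longrightarrow> cell_pair E (a j) (a' j)"
      "\<And>j. j \<in> J \<Longrightarrow> small_on_support A \<delta> (a j)"
      "\<And>x. 1/2 \<le> (\<Sum>j\<in>J. a j x)" "\<And>x. (\<Sum>j\<in>J. a' j x) \<le> 4 ^ card A"
    then show thesis
      by (intro that[of J a a' "\<lambda>j. SOME x. 0 < a j x"]) (simp_all add: centered_cellI)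
  qed (use E E_const assms M in simp_all)
qed

end

section \<open>Controlled pairs\<close>

definition lipschitz_wrt :: "('x \<Rightarrow> real) set \<Rightarrow> ('y \<Rightarrow> real) set \<Rightarrow> real \<Rightarrow> ('x \<times> 'y \<Rightarrow> real) \<Rightarrow> bool"
  where "lipschitz_wrt A B K h \<longleftrightarrow> (\<forall>\<delta> x x' y y'. 0 \<le> \<delta> \<longrightarrow> (\<forall>f\<in>A. \<bar>f x - f x'\<bar> \<le> \<delta>) \<longrightarrow>
     (\<forall>g\<in>B. \<bar>g y - g y'\<bar> \<le> \<delta>) \<longrightarrow> \<bar>h (x, y) - h (x', y')\<bar> \<le> K * \<delta>)"

lemma lipschitz_wrt_mono:
  assumes "lipschitz_wrt A B K h" "A \<subseteq> A'" "B \<subseteq> B'" "K \<le> K'"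
  shows "lipschitz_wrt A' B' K' h"
  unfolding lipschitz_wrt_def
proof (intro allI impI)
  fix \<delta> x x' y y' assume "0 \<le> \<delta>" "\<forall>f\<in>A'. \<bar>f x - f x'\<bar> \<le> \<delta>" "\<forall>g\<in>B'. \<bar>g y - g y'\<bar> \<le> \<delta>"
  then have "\<bar>h (x, y) - h (x', y')\<bar> \<le> K * \<delta>"
    using assms(1-3) unfolding lipschitz_wrt_def by blast
  also have "\<dots> \<le> K' * \<delta>" using assms(4) \<open>0 \<le> \<delta>\<close> by (rule mult_right_mono)
  finally show "\<bar>h (x, y) - h (x', y')\<bar> \<le> K' * \<delta>" .
qed

lemma lipschitz_wrt_chi:
  assumes Mf: "\<And>x. \<bar>f x\<bar> \<le> Mf" and Mg: "\<And>y. \<bar>g y\<bar> \<le> Mg"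
  shows "lipschitz_wrt {f} {g} (Mg + Mf) (chi f g)"
  unfolding lipschitz_wrt_def
proof (intro allI impI)
  fix \<delta> x x' y y' assume \<delta>: "0 \<le> \<delta>" and "\<forall>f'\<in>{f}. \<bar>f' x - f' x'\<bar> \<le> \<delta>" "\<forall>g'\<in>{g}. \<bar>g' y - g' y'\<bar> \<le> \<delta>"
  then have dx: "\<bar>f x - f x'\<bar> \<le> \<delta>" and dy: "\<bar>g y - g y'\<bar> \<le> \<delta>" by simp_all
  have "\<bar>f x * g y - f x' * g y'\<bar> = \<bar>(f x - f x') * g y + f x' * (g y - g y')\<bar>"
    by (simp add: algebra_simps)
  also have "\<dots> \<le> \<delta> * Mg + Mf * \<delta>"
    using dx dy Mf Mg \<delta> by (intro order.trans[OF abs_triangle_ineq] add_mono)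
      (simp_all add: abs_mult mult_mono')
  finally show "\<bar>chi f g (x, y) - chi f g (x', y')\<bar> \<le> (Mg + Mf) * \<delta>"
    by (simp add: chi_def algebra_simps)
qed

lemma chi_le_abs_lipschitz:
  assumes lip: "lipschitz_wrt A B K h" and \<delta>: "0 \<le> \<delta>" and K\<delta>: "K * \<delta> < \<eta>"
    and \<eta>: "2 * \<eta> = \<bar>h (x0, y0)\<bar>" "0 < \<eta>"
    and a: "small_on_support A \<delta> a" "\<And>x. 0 \<le> a x \<and> a x \<le> 1" "0 < a x0"
    and b: "small_on_support B \<delta> b" "\<And>y. 0 \<le> b y \<and> b y \<le> 1" "0 < b y0"
  shows "chi a b p \<le> (1 / \<eta>) * \<bar>h p\<bar>"
proof (cases p)
  case (Pair x y)
  show ?thesis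
  proof (cases "0 < a x \<and> 0 < b y")
    case True
    then have "\<forall>f\<in>A. \<bar>f x - f x0\<bar> \<le> \<delta>" "\<forall>g\<in>B. \<bar>g y - g y0\<bar> \<le> \<delta>"
      using a(1,3) b(1,3) unfolding small_on_support_def by blast+
    then have "\<bar>h (x, y) - h (x0, y0)\<bar> \<le> K * \<delta>"
      using lip \<delta> unfolding lipschitz_wrt_def by blast
    then have "1 \<le> (1 / \<eta>) * \<bar>h (x, y)\<bar>"
      using K\<delta> \<eta> by (simp add: field_simps)
    moreover have "a x * b y \<le> 1" using a(2)[of x] b(2)[of y] by (simp add: mult_le_one)
    ultimately show ?thesis by (simp add: Pair chi_def)
  next
    case False
    then have "chi a b p = 0"
      using a(2)[of x] b(2)[of y] by (auto simp: Pair chi_def less_le)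
    then show ?thesis using \<eta> by simp
  qed
qed

context bounded_riesz_bimorphism
begin

definition locally_controlled ::
    "('x \<Rightarrow> real) set \<Rightarrow> ('y \<Rightarrow> real) set \<Rightarrow> real \<Rightarrow> ('x \<times> 'y \<Rightarrow> real) \<Rightarrow> 'g \<Rightarrow> bool"
  where "locally_controlled A B K h z \<longleftrightarrow> (\<forall>\<delta> a a' x0 b b' y0 C. 0 \<le> \<delta> \<longrightarrow>
     centered_cell E A \<delta> a a' x0 \<longrightarrow> centered_cell F B \<delta> b b' y0 \<longrightarrow> 0 \<le> C \<longrightarrow>
     inf (riesz_abs (z - h (x0, y0) *\<^sub>R u)) (C *\<^sub>R \<phi> a b) \<le> (K * \<delta>) *\<^sub>R \<phi> a' b')"

definition controlled_by ::
    "('x \<Rightarrow> real) set \<Rightarrow> ('y \<Rightarrow> real) set \<Rightarrow> real \<Rightarrow> ('x \<times> 'y \<Rightarrow> real) \<Rightarrow> 'g \<Rightarrow> bool"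
  where "controlled_by A B K h z \<longleftrightarrow> 0 \<le> K \<and> riesz_abs z \<le> K *\<^sub>R u \<and>
     lipschitz_wrt A B K h \<and> locally_controlled A B K h z"

definition controlled :: "('x \<times> 'y \<Rightarrow> real) \<Rightarrow> 'g \<Rightarrow> bool" where
  "controlled h z \<longleftrightarrow> (\<exists>A B K. finite A \<and> A \<subseteq> E \<and> finite B \<and> B \<subseteq> F \<and> controlled_by A B K h z)"

lemma locally_controlled_mono:
  assumes loc: "locally_controlled A B K h z" and "A \<subseteq> A'" "B \<subseteq> B'" "K \<le> K'"
  shows "locally_controlled A' B' K' h z"
  unfolding locally_controlled_def
proof (intro allI impI)
  fix \<delta> C :: real and a a' x0 b b' y0
  assume \<delta>: "0 \<le> \<delta>" and a: "centered_cell E A' \<delta> a a' x0" and b: "centered_cell F B' \<delta> b b' y0"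
    and C: "0 \<le> C"
  have "inf (riesz_abs (z - h (x0, y0) *\<^sub>R u)) (C *\<^sub>R \<phi> a b) \<le> (K * \<delta>) *\<^sub>R \<phi> a' b'"
    using loc \<delta> centered_cell_mono[OF a assms(2)] centered_cell_mono[OF b assms(3)] C
    unfolding locally_controlled_def by blast
  also have "\<dots> \<le> (K' * \<delta>) *\<^sub>R \<phi> a' b'"
    using a b assms(4) \<delta> cell_pair_phi_nonneg
    by (intro scaleR_right_mono mult_right_mono) (auto simp: centered_cell_def)
  finally show "inf (riesz_abs (z - h (x0, y0) *\<^sub>R u)) (C *\<^sub>R \<phi> a b) \<le> (K' * \<delta>) *\<^sub>R \<phi> a' b'" .
qed

lemma controlled_by_mono:
  assumes "controlled_by A B K h z" "A \<subseteq> A'" "B \<subseteq> B'" "K \<le> K'"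
  shows "controlled_by A' B' K' h z"
  using assms order.trans[OF _ scaleR_right_mono[OF assms(4) u_nonneg]]
  by (auto simp: controlled_by_def intro: lipschitz_wrt_mono locally_controlled_mono)

lemma locally_controlled_chi:
  assumes f: "f \<in> E" and g: "g \<in> F" and Mf: "\<And>x. \<bar>f x\<bar> \<le> Mf" and Mg: "\<And>y. \<bar>g y\<bar> \<le> Mg"
  shows "locally_controlled {f} {g} (Mg + Mf) (chi f g) (\<phi> f g)"
  unfolding locally_controlled_def
proof (intro allI impI)
  interpret swapped: bounded_riesz_bimorphism F E "\<lambda>g f. \<phi> f g" by (rule swap)
  fix \<delta> C :: real and a a' x0 b b' y0
  assume \<delta>: "0 \<le> \<delta>" and a: "centered_cell E {f} \<delta> a a' x0" and b: "centered_cell F {g} \<delta> b b' y0"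
    and C: "0 \<le> C"
  have cells: "cell_pair E a a'" "cell_pair F b b'" and
    close: "\<And>x. 0 < a x \<Longrightarrow> \<bar>f x - f x0\<bar> \<le> \<delta>" "\<And>y. 0 < b y \<Longrightarrow> \<bar>g y - g y0\<bar> \<le> \<delta>"
    using a b by (simp_all add: centered_cell_def)
  have ab: "0 \<le> \<phi> a b" "0 \<le> \<phi> a' b'" using cell_pair_phi_nonneg[OF cells] by simp_all
  have Mg0: "0 \<le> Mg" using Mg by (meson abs_ge_zero order.trans)
  let ?X = "Mg *\<^sub>R \<phi> (\<lambda>x. \<bar>f x - f x0\<bar>) (\<lambda>y. 1)"
  let ?Y = "\<bar>f x0\<bar> *\<^sub>R \<phi> (\<lambda>x. 1) (\<lambda>y. \<bar>g y - g y0\<bar>)"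
  have "inf (riesz_abs (\<phi> f g - chi f g (x0, y0) *\<^sub>R u)) (C *\<^sub>R \<phi> a b)
      \<le> inf ?X (C *\<^sub>R \<phi> a b) + inf ?Y (C *\<^sub>R \<phi> a b)"
  proof (rule inf_le_inf_add)
    show "riesz_abs (\<phi> f g - chi f g (x0, y0) *\<^sub>R u) \<le> ?X + ?Y"
      using phi_abs_deviation_le[OF f g Mg] by (simp add: chi_def)
    show "0 \<le> ?X" "0 \<le> ?Y"
      using Mg0 f g E F E_const F_const
      by (intro scaleR_nonneg_nonneg phi_nonneg; simp add: riesz_subspace_fun_closed)+
    show "0 \<le> C *\<^sub>R \<phi> a b" using C ab(1) by (rule scaleR_nonneg_nonneg)
  qed
  also have "\<dots> \<le> (Mg * \<delta>) *\<^sub>R \<phi> a' b' + (\<bar>f x0\<bar> * \<delta>) *\<^sub>R \<phi> a' b'"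
    using inf_phi_oscillation_le[OF f Mg0 C \<delta> cells close(1)]
      swapped.inf_phi_oscillation_le[OF g abs_ge_zero C \<delta> cells(2,1) close(2)]
    by (intro add_mono) simp_all
  also have "\<dots> \<le> ((Mg + Mf) * \<delta>) *\<^sub>R \<phi> a' b'"
    using Mf[of x0] \<delta> ab by (simp add: scaleR_left_distrib[symmetric] scaleR_right_mono
        mult_right_mono distrib_right[symmetric])
  finally show "inf (riesz_abs (\<phi> f g - chi f g (x0, y0) *\<^sub>R u)) (C *\<^sub>R \<phi> a b)
      \<le> ((Mg + Mf) * \<delta>) *\<^sub>R \<phi> a' b'" .
qed

lemma phi_abs_le_const:
  assumes f: "f \<in> E" and g: "g \<in> F" and Mf: "\<And>x. \<bar>f x\<bar> \<le> Mf" and Mg: "\<And>y. \<bar>g y\<bar> \<le> Mg"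
  shows "riesz_abs (\<phi> f g) \<le> (Mf * Mg) *\<^sub>R u"
proof -
  have "riesz_abs (\<phi> f g) \<le> \<phi> (\<lambda>x. \<bar>f x\<bar>) (\<lambda>y. \<bar>g y\<bar>)" by (rule phi_abs_le[OF f g])
  also have "\<dots> \<le> \<phi> (\<lambda>x. Mf) (\<lambda>y. \<bar>g y\<bar>)"
    by (rule phi_mono_left) (use f g E F E_const Mf in \<open>simp_all add: riesz_subspace_fun_abs\<close>)
  also have "\<dots> \<le> \<phi> (\<lambda>x. Mf) (\<lambda>y. Mg)"
    by (rule phi_mono_right) (use g F E_const F_const Mg Mf order.trans[OF abs_ge_zero Mf] in
        \<open>simp_all add: riesz_subspace_fun_abs\<close>)
  also have "\<dots> = (Mf * Mg) *\<^sub>R u" by (rule phi_const_const)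
  finally show ?thesis .
qed

lemma controlled_by_combine:
  assumes ctrl1: "controlled_by A B K1 h1 z1" and ctrl2: "controlled_by A B K2 h2 z2"
    and bound: "riesz_abs z \<le> riesz_abs z1 + riesz_abs z2"
    and lip: "\<And>p q. \<bar>h p - h q\<bar> \<le> \<bar>h1 p - h1 q\<bar> + \<bar>h2 p - h2 q\<bar>"
    and loc: "\<And>p. riesz_abs (z - h p *\<^sub>R u)
      \<le> riesz_abs (z1 - h1 p *\<^sub>R u) + riesz_abs (z2 - h2 p *\<^sub>R u)"
  shows "controlled_by A B (K1 + K2) h z"
  unfolding controlled_by_def
proof (intro conjI)
  show "0 \<le> K1 + K2" using ctrl1 ctrl2 by (simp add: controlled_by_def)
  show "riesz_abs z \<le> (K1 + K2) *\<^sub>R u"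
    using bound add_mono[of "riesz_abs z1" "K1 *\<^sub>R u" "riesz_abs z2" "K2 *\<^sub>R u"] ctrl1 ctrl2
    by (simp add: controlled_by_def scaleR_left_distrib)
  show "lipschitz_wrt A B (K1 + K2) h"
    unfolding lipschitz_wrt_def
  proof (intro allI impI)
    fix \<delta> x x' y y' assume "0 \<le> \<delta>" "\<forall>f\<in>A. \<bar>f x - f x'\<bar> \<le> \<delta>" "\<forall>g\<in>B. \<bar>g y - g y'\<bar> \<le> \<delta>"
    then have "\<bar>h1 (x, y) - h1 (x', y')\<bar> \<le> K1 * \<delta>" "\<bar>h2 (x, y) - h2 (x', y')\<bar> \<le> K2 * \<delta>"
      using ctrl1 ctrl2 unfolding controlled_by_def lipschitz_wrt_def by blast+
    then show "\<bar>h (x, y) - h (x', y')\<bar> \<le> (K1 + K2) * \<delta>"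
      using lip[of "(x, y)" "(x', y')"] by (simp add: distrib_right)
  qed
  show "locally_controlled A B (K1 + K2) h z"
    unfolding locally_controlled_def
  proof (intro allI impI)
    fix \<delta> C :: real and a a' x0 b b' y0
    assume \<delta>: "0 \<le> \<delta>" and a: "centered_cell E A \<delta> a a' x0" and b: "centered_cell F B \<delta> b b' y0"
      and C: "0 \<le> C"
    have "0 \<le> C *\<^sub>R \<phi> a b"
      using a b C cell_pair_phi_nonneg[of a a' b b']
      by (simp add: centered_cell_def scaleR_nonneg_nonneg)
    then have "inf (riesz_abs (z - h (x0, y0) *\<^sub>R u)) (C *\<^sub>R \<phi> a b)
        \<le> inf (riesz_abs (z1 - h1 (x0, y0) *\<^sub>R u)) (C *\<^sub>R \<phi> a b)
          + inf (riesz_abs (z2 - h2 (x0, y0) *\<^sub>R u)) (C *\<^sub>R \<phi> a b)"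
      using loc by (intro inf_le_inf_add) (simp_all add: riesz.abs_ge_zero)
    also have "\<dots> \<le> (K1 * \<delta>) *\<^sub>R \<phi> a' b' + (K2 * \<delta>) *\<^sub>R \<phi> a' b'"
      using ctrl1 ctrl2 \<delta> a b C unfolding controlled_by_def locally_controlled_def
      by (intro add_mono) blast+
    finally show "inf (riesz_abs (z - h (x0, y0) *\<^sub>R u)) (C *\<^sub>R \<phi> a b) \<le> ((K1 + K2) * \<delta>) *\<^sub>R \<phi> a' b'"
      by (simp add: algebra_simps)
  qed
qed

lemma controlled_by_add:
  assumes "controlled_by A B K1 h1 z1" "controlled_by A B K2 h2 z2"
  shows "controlled_by A B (K1 + K2) (\<lambda>p. h1 p + h2 p) (z1 + z2)"
proof (rule controlled_by_combine[OF assms])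
  show "riesz_abs (z1 + z2) \<le> riesz_abs z1 + riesz_abs z2" by (rule riesz.abs_triangle_ineq)
  show "\<bar>(h1 p + h2 p) - (h1 q + h2 q)\<bar> \<le> \<bar>h1 p - h1 q\<bar> + \<bar>h2 p - h2 q\<bar>" for p q
    by (simp add: abs_triangle_ineq add_diff_add)
  show "riesz_abs (z1 + z2 - (h1 p + h2 p) *\<^sub>R u)
      \<le> riesz_abs (z1 - h1 p *\<^sub>R u) + riesz_abs (z2 - h2 p *\<^sub>R u)" for p
    using riesz.abs_triangle_ineq[of "z1 - h1 p *\<^sub>R u" "z2 - h2 p *\<^sub>R u"]
    by (simp add: algebra_simps)
qed

lemma controlled_by_max:
  assumes "controlled_by A B K1 h1 z1" "controlled_by A B K2 h2 z2"
  shows "controlled_by A B (K1 + K2) (\<lambda>p. max (h1 p) (h2 p)) (sup z1 z2)"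
proof (rule controlled_by_combine[OF assms])
  show "riesz_abs (sup z1 z2) \<le> riesz_abs z1 + riesz_abs z2"
    using riesz_abs_sup_diff[of z1 z2 0 0] by simp
  show "\<bar>max (h1 p) (h2 p) - max (h1 q) (h2 q)\<bar> \<le> \<bar>h1 p - h1 q\<bar> + \<bar>h2 p - h2 q\<bar>" for p q
    by (simp add: max_def abs_if)
  show "riesz_abs (sup z1 z2 - max (h1 p) (h2 p) *\<^sub>R u)
      \<le> riesz_abs (z1 - h1 p *\<^sub>R u) + riesz_abs (z2 - h2 p *\<^sub>R u)" for p
    unfolding max_scaleR_nonneg[OF u_nonneg] by (rule riesz_abs_sup_diff)
qed

lemma controlled_by_scale:
  assumes ctrl: "controlled_by A B K h z"
  shows "controlled_by A B (\<bar>c\<bar> * K) (\<lambda>p. c * h p) (c *\<^sub>R z)"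
  unfolding controlled_by_def
proof (intro conjI)
  have K: "0 \<le> K" and bound: "riesz_abs z \<le> K *\<^sub>R u" and lip: "lipschitz_wrt A B K h"
    and loc: "locally_controlled A B K h z"
    using ctrl by (simp_all add: controlled_by_def)
  show "0 \<le> \<bar>c\<bar> * K" using K by simp
  show "riesz_abs (c *\<^sub>R z) \<le> (\<bar>c\<bar> * K) *\<^sub>R u"
    using scaleR_left_mono[OF bound, of "\<bar>c\<bar>"] by (simp add: riesz_abs_scaleR)
  show "lipschitz_wrt A B (\<bar>c\<bar> * K) (\<lambda>p. c * h p)"
    using lip unfolding lipschitz_wrt_def
    by (auto simp: right_diff_distrib[symmetric] abs_mult mult.assoc intro!: mult_left_mono)
  show "locally_controlled A B (\<bar>c\<bar> * K) (\<lambda>p. c * h p) (c *\<^sub>R z)"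
    unfolding locally_controlled_def
  proof (intro allI impI)
    fix \<delta> C :: real and a a' x0 b b' y0
    assume \<delta>: "0 \<le> \<delta>" and a: "centered_cell E A \<delta> a a' x0" and b: "centered_cell F B \<delta> b b' y0"
      and C: "0 \<le> C"
    show "inf (riesz_abs (c *\<^sub>R z - (c * h (x0, y0)) *\<^sub>R u)) (C *\<^sub>R \<phi> a b) \<le> (\<bar>c\<bar> * K * \<delta>) *\<^sub>R \<phi> a' b'"
    proof (cases "c = 0")
      case False
      have "c *\<^sub>R z - (c * h (x0, y0)) *\<^sub>R u = c *\<^sub>R (z - h (x0, y0) *\<^sub>R u)"
        by (simp add: algebra_simps)
      moreover have "C *\<^sub>R \<phi> a b = \<bar>c\<bar> *\<^sub>R ((C / \<bar>c\<bar>) *\<^sub>R \<phi> a b)" using False by simp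
      ultimately have "inf (riesz_abs (c *\<^sub>R z - (c * h (x0, y0)) *\<^sub>R u)) (C *\<^sub>R \<phi> a b)
          = \<bar>c\<bar> *\<^sub>R inf (riesz_abs (z - h (x0, y0) *\<^sub>R u)) ((C / \<bar>c\<bar>) *\<^sub>R \<phi> a b)"
        by (simp only: riesz_abs_scaleR scaleR_inf[OF abs_ge_zero])
      also have "\<dots> \<le> \<bar>c\<bar> *\<^sub>R ((K * \<delta>) *\<^sub>R \<phi> a' b')"
        using loc \<delta> a b C unfolding locally_controlled_def by (intro scaleR_left_mono) simp_all
      finally show ?thesis by (simp add: mult.assoc)
    qed simp
  qed
qed

lemma controlled_by_chi:
  assumes f: "f \<in> E" and g: "g \<in> F"
  obtains K where "controlled_by {f} {g} K (chi f g) (\<phi> f g)"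
proof -
  interpret swapped: bounded_riesz_bimorphism F E "\<lambda>g f. \<phi> f g" by (rule swap)
  obtain Mf where Mf: "\<And>x. \<bar>f x\<bar> \<le> Mf" using E_uniform_bound[of "{f}"] f by auto
  obtain Mg where Mg: "\<And>y. \<bar>g y\<bar> \<le> Mg" using swapped.E_uniform_bound[of "{g}"] g by auto
  have M0: "0 \<le> Mf" "0 \<le> Mg" using Mf Mg by (meson abs_ge_zero order.trans)+
  then have K: "0 \<le> Mf * Mg + (Mg + Mf)" "Mf * Mg \<le> Mf * Mg + (Mg + Mf)"
    by simp_all
  show thesis
  proof (rule that, unfold controlled_by_def, intro conjI)
    show "riesz_abs (\<phi> f g) \<le> (Mf * Mg + (Mg + Mf)) *\<^sub>R u"
      using phi_abs_le_const[OF f g Mf Mg] scaleR_right_mono[OF K(2) u_nonneg] by (rule order.trans)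
    show "lipschitz_wrt {f} {g} (Mf * Mg + (Mg + Mf)) (chi f g)"
      using lipschitz_wrt_chi[OF Mf Mg] by (rule lipschitz_wrt_mono) (simp_all add: M0)
    show "locally_controlled {f} {g} (Mf * Mg + (Mg + Mf)) (chi f g) (\<phi> f g)"
      using locally_controlled_chi[OF f g Mf Mg]
      by (rule locally_controlled_mono) (simp_all add: M0)
  qed (rule K(1))
qed

lemma controlled_chi: "f \<in> E \<Longrightarrow> g \<in> F \<Longrightarrow> controlled (chi f g) (\<phi> f g)"
  unfolding controlled_def by (metis controlled_by_chi finite.simps empty_subsetI insert_subset)

lemma controlled_combine:
  assumes "controlled h1 z1" "controlled h2 z2"
    and combine: "\<And>A B K1 K2. controlled_by A B K1 h1 z1 \<Longrightarrow> controlled_by A B K2 h2 z2 \<Longrightarrow>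
      controlled_by A B (K1 + K2) h z"
  shows "controlled h z"
proof -
  obtain A1 B1 K1 A2 B2 K2 where A: "finite A1" "A1 \<subseteq> E" "finite A2" "A2 \<subseteq> E"
    and B: "finite B1" "B1 \<subseteq> F" "finite B2" "B2 \<subseteq> F"
    and ctrl: "controlled_by A1 B1 K1 h1 z1" "controlled_by A2 B2 K2 h2 z2"
    using assms(1,2) unfolding controlled_def by blast
  have "controlled_by (A1 \<union> A2) (B1 \<union> B2) K1 h1 z1" "controlled_by (A1 \<union> A2) (B1 \<union> B2) K2 h2 z2"
    by (rule controlled_by_mono[OF ctrl(1)] controlled_by_mono[OF ctrl(2)]; simp)+
  then have "controlled_by (A1 \<union> A2) (B1 \<union> B2) (K1 + K2) h z" by (rule combine)
  then show ?thesis
    unfolding controlled_def using A B by (intro exI[of _ "A1 \<union> A2"] exI[of _ "B1 \<union> B2"]) auto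
qed

section \<open>The graph of the extension\<close>

inductive_set graph :: "(('x \<times> 'y \<Rightarrow> real) \<times> 'g) set" where
  gen: "f \<in> E \<Longrightarrow> g \<in> F \<Longrightarrow> (chi f g, \<phi> f g) \<in> graph"
| add: "(h1, z1) \<in> graph \<Longrightarrow> (h2, z2) \<in> graph \<Longrightarrow> ((\<lambda>p. h1 p + h2 p), z1 + z2) \<in> graph"
| scale: "(h, z) \<in> graph \<Longrightarrow> ((\<lambda>p. c * h p), c *\<^sub>R z) \<in> graph"
| max: "(h1, z1) \<in> graph \<Longrightarrow> (h2, z2) \<in> graph \<Longrightarrow> ((\<lambda>p. max (h1 p) (h2 p)), sup z1 z2) \<in> graph"

lemma graph_controlled: "(h, z) \<in> graph \<Longrightarrow> controlled h z"
proof (induction rule: graph.induct)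
  case (gen f g)
  then show ?case by (rule controlled_chi)
next
  case (add h1 z1 h2 z2)
  show ?case by (rule controlled_combine[OF add.IH]) (rule controlled_by_add)
next
  case (scale h z c)
  then obtain A B K where "finite A" "A \<subseteq> E" "finite B" "B \<subseteq> F" "controlled_by A B K h z"
    unfolding controlled_def by blast
  then show ?case unfolding controlled_def by (blast intro: controlled_by_scale)
next
  case (max h1 z1 h2 z2)
  show ?case by (rule controlled_combine[OF max.IH]) (rule controlled_by_max)
qed

lemma phi_cover_bounds:
  assumes J: "\<And>j. j \<in> J \<Longrightarrow> cell_pair E (a j) (a' j)" and I: "\<And>i. i \<in> I \<Longrightarrow> cell_pair F (b i) (b' i)"
    and a: "\<And>x. 1/2 \<le> (\<Sum>j\<in>J. a j x)" "\<And>x. (\<Sum>j\<in>J. a' j x) \<le> M"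
    and b: "\<And>y. 1/2 \<le> (\<Sum>i\<in>I. b i y)" "\<And>y. (\<Sum>i\<in>I. b' i y) \<le> N"
  shows "u \<le> 4 *\<^sub>R (\<Sum>j\<in>J. \<Sum>i\<in>I. \<phi> (a j) (b i))"
    and "(\<Sum>j\<in>J. \<Sum>i\<in>I. \<phi> (a' j) (b' i)) \<le> (M * N) *\<^sub>R u"
proof -
  have mem: "(\<lambda>x. \<Sum>j\<in>J. a j x) \<in> E" "(\<lambda>x. \<Sum>j\<in>J. a' j x) \<in> E"
    "(\<lambda>y. \<Sum>i\<in>I. b i y) \<in> F" "(\<lambda>y. \<Sum>i\<in>I. b' i y) \<in> F"
    using J I by (auto simp: cell_pair_def intro!: riesz_subspace_fun_sum E F)
  have nn: "0 \<le> (\<Sum>j\<in>J. a j x)" "0 \<le> (\<Sum>j\<in>J. a' j x)" "0 \<le> (\<Sum>i\<in>I. b' i y)" for x y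
    using J I by (auto simp: cell_pair_def intro!: sum_nonneg)
  have sums: "(\<Sum>j\<in>J. \<Sum>i\<in>I. \<phi> (a j) (b i)) = \<phi> (\<lambda>x. \<Sum>j\<in>J. a j x) (\<lambda>y. \<Sum>i\<in>I. b i y)"
    "(\<Sum>j\<in>J. \<Sum>i\<in>I. \<phi> (a' j) (b' i)) = \<phi> (\<lambda>x. \<Sum>j\<in>J. a' j x) (\<lambda>y. \<Sum>i\<in>I. b' i y)"
    using J I by (auto simp: cell_pair_def intro!: phi_sum_sum)
  have "(1/4) *\<^sub>R u = \<phi> (\<lambda>x. 1/2) (\<lambda>y. 1/2)" using phi_const_const[of "1/2" "1/2"] by simp
  also have "\<dots> \<le> \<phi> (\<lambda>x. \<Sum>j\<in>J. a j x) (\<lambda>y. 1/2)"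
    by (rule phi_mono_left) (use mem a E_const F_const in simp_all)
  also have "\<dots> \<le> \<phi> (\<lambda>x. \<Sum>j\<in>J. a j x) (\<lambda>y. \<Sum>i\<in>I. b i y)"
    by (rule phi_mono_right) (use mem nn b F_const in simp_all)
  finally have "4 *\<^sub>R ((1/4) *\<^sub>R u) \<le> 4 *\<^sub>R (\<Sum>j\<in>J. \<Sum>i\<in>I. \<phi> (a j) (b i))"
    unfolding sums(1) by (rule scaleR_left_mono) simp
  then show "u \<le> 4 *\<^sub>R (\<Sum>j\<in>J. \<Sum>i\<in>I. \<phi> (a j) (b i))" by simp
  have "\<phi> (\<lambda>x. \<Sum>j\<in>J. a' j x) (\<lambda>y. \<Sum>i\<in>I. b' i y) \<le> \<phi> (\<lambda>x. M) (\<lambda>y. \<Sum>i\<in>I. b' i y)"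
    by (rule phi_mono_left) (use mem a nn E_const in simp_all)
  also have "\<dots> \<le> \<phi> (\<lambda>x. M) (\<lambda>y. N)"
    by (rule phi_mono_right) (use mem b nn E_const F_const order.trans[OF nn(2) a(2)] in simp_all)
  finally show "(\<Sum>j\<in>J. \<Sum>i\<in>I. \<phi> (a' j) (b' i)) \<le> (M * N) *\<^sub>R u"
    unfolding sums(2) phi_const_const[of M N] .
qed

lemma controlled_by_pos_part_le:
  assumes A: "finite A" "A \<subseteq> E" and B: "finite B" "B \<subseteq> F" and ctrl: "controlled_by A B K h z"
    and h: "\<And>p. h p \<le> 0" and \<delta>: "0 < \<delta>"
  shows "sup z 0 \<le> \<delta> *\<^sub>R ((K * 4 ^ card A * 4 ^ card B) *\<^sub>R u)"
proof -
  interpret swapped: bounded_riesz_bimorphism F E "\<lambda>g f. \<phi> f g" by (rule swap)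
  have K: "0 \<le> K" and bound: "riesz_abs z \<le> K *\<^sub>R u" and loc: "locally_controlled A B K h z"
    using ctrl by (simp_all add: controlled_by_def)
  obtain J :: "(('x \<Rightarrow> real) \<Rightarrow> int) set" and a a' x0 where "finite J"
    and a: "\<And>j. j \<in> J \<Longrightarrow> centered_cell E A \<delta> (a j) (a' j) (x0 j)"
    and a_sums: "\<And>x. 1/2 \<le> (\<Sum>j\<in>J. a j x)" "\<And>x. (\<Sum>j\<in>J. a' j x) \<le> 4 ^ card A"
    by (rule E_cover[OF A \<delta>]) blast
  obtain I :: "(('y \<Rightarrow> real) \<Rightarrow> int) set" and b b' y0 where "finite I"
    and b: "\<And>i. i \<in> I \<Longrightarrow> centered_cell F B \<delta> (b i) (b' i) (y0 i)"
    and b_sums: "\<And>y. 1/2 \<le> (\<Sum>i\<in>I. b i y)" "\<And>y. (\<Sum>i\<in>I. b' i y) \<le> 4 ^ card B"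
    by (rule swapped.E_cover[OF B \<delta>]) blast
  have cell_a: "\<And>j. j \<in> J \<Longrightarrow> cell_pair E (a j) (a' j)"
    and cell_b: "\<And>i. i \<in> I \<Longrightarrow> cell_pair F (b i) (b' i)"
    using a b by (simp_all add: centered_cell_def)
  note bounds = phi_cover_bounds[OF cell_a cell_b a_sums b_sums]
  let ?w = "sup z 0" and ?W = "\<lambda>j i. (K * 4) *\<^sub>R \<phi> (a j) (b i)"
  have "?w \<le> riesz_abs z" by (simp add: riesz.abs_ge_self riesz.abs_ge_zero)
  also have "\<dots> \<le> K *\<^sub>R (4 *\<^sub>R (\<Sum>j\<in>J. \<Sum>i\<in>I. \<phi> (a j) (b i)))"
    using bound scaleR_left_mono[OF bounds(1) K] by (rule order.trans)
  also have "\<dots> = (\<Sum>j\<in>J. \<Sum>i\<in>I. ?W j i)"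
    by (simp add: scaleR_sum_right)
  finally have "?w = inf ?w (\<Sum>j\<in>J. \<Sum>i\<in>I. ?W j i)" by (simp add: inf_absorb1)
  also have "\<dots> \<le> (\<Sum>j\<in>J. \<Sum>i\<in>I. inf ?w (?W j i))"
    using cell_pair_phi_nonneg[OF cell_a cell_b] K
    by (intro inf_double_sum_le) (simp_all add: scaleR_nonneg_nonneg)
  also have "\<dots> \<le> (\<Sum>j\<in>J. \<Sum>i\<in>I. (K * \<delta>) *\<^sub>R \<phi> (a' j) (b' i))"
  proof (intro sum_mono)
    fix j i assume j: "j \<in> J" and i: "i \<in> I"
    have "z \<le> z - h (x0 j, y0 i) *\<^sub>R u"
      using h[of "(x0 j, y0 i)"] u_nonneg by (simp add: scaleR_nonpos_nonneg)
    then have "?w \<le> riesz_abs (z - h (x0 j, y0 i) *\<^sub>R u)"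
      by (meson order.trans riesz.abs_ge_self riesz.abs_ge_zero sup_least)
    then have "inf ?w (?W j i) \<le> inf (riesz_abs (z - h (x0 j, y0 i) *\<^sub>R u)) (?W j i)"
      by (rule inf_mono) simp
    also have "\<dots> \<le> (K * \<delta>) *\<^sub>R \<phi> (a' j) (b' i)"
      using loc a[OF j] b[OF i] \<delta> K unfolding locally_controlled_def by simp
    finally show "inf ?w (?W j i) \<le> (K * \<delta>) *\<^sub>R \<phi> (a' j) (b' i)" .
  qed
  also have "\<dots> = (K * \<delta>) *\<^sub>R (\<Sum>j\<in>J. \<Sum>i\<in>I. \<phi> (a' j) (b' i))"
    by (simp add: scaleR_sum_right)
  also have "\<dots> \<le> (K * \<delta>) *\<^sub>R ((4 ^ card A * 4 ^ card B) *\<^sub>R u)"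
    using bounds(2) K \<delta> by (intro scaleR_left_mono) simp_all
  finally show ?thesis by (simp add: algebra_simps)
qed

lemma graph_nonpos:
  assumes hz: "(h, z) \<in> graph" and h: "\<And>p. h p \<le> 0"
  shows "z \<le> 0"
proof -
  obtain A B K where A: "finite A" "A \<subseteq> E" and B: "finite B" "B \<subseteq> F"
    and ctrl: "controlled_by A B K h z"
    using graph_controlled[OF hz] unfolding controlled_def by blast
  have "sup z 0 = 0"
    by (rule archimedean_le_scaleR[OF _ controlled_by_pos_part_le[OF A B ctrl h]]) simp_all
  then show ?thesis by (metis sup.cobounded1)
qed

lemma graph_diff: "(h1, z1) \<in> graph \<Longrightarrow> (h2, z2) \<in> graph \<Longrightarrow> ((\<lambda>p. h1 p - h2 p), z1 - z2) \<in> graph"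
  using graph.add[OF _ graph.scale[of h2 z2 "- 1"]] by simp

lemma graph_abs:
  assumes "(h, z) \<in> graph"
  shows "((\<lambda>p. \<bar>h p\<bar>), riesz_abs z) \<in> graph"
proof -
  have "((\<lambda>p. max (h p) (- 1 * h p)), sup z ((- 1) *\<^sub>R z)) \<in> graph"
    by (rule graph.max[OF assms graph.scale[OF assms]])
  moreover have "(\<lambda>p. max (h p) (- 1 * h p)) = (\<lambda>p. \<bar>h p\<bar>)" by (auto simp: fun_eq_iff)
  ultimately show ?thesis by (simp add: riesz_abs_def)
qed

lemma graph_unique: "(h, z1) \<in> graph \<Longrightarrow> (h, z2) \<in> graph \<Longrightarrow> z1 = z2"
  using graph_nonpos[OF graph_diff, of h z1 h z2] graph_nonpos[OF graph_diff, of h z2 h z1] by simp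

lemma obtain_chi_le_abs:
  assumes A: "finite A" "A \<subseteq> E" and B: "finite B" "B \<subseteq> F" and K: "0 \<le> K"
    and lip: "lipschitz_wrt A B K h" and h0: "h (x0, y0) \<noteq> 0"
  obtains a b c where "a \<in> E" "b \<in> F" "\<And>x. 0 \<le> a x" "\<And>y. 0 \<le> b y" "0 < a x0" "0 < b y0"
    "\<And>p. chi a b p \<le> c * \<bar>h p\<bar>"
proof -
  interpret swapped: bounded_riesz_bimorphism F E "\<lambda>g f. \<phi> f g" by (rule swap)
  define \<eta> where "\<eta> = \<bar>h (x0, y0)\<bar> / 2"
  have \<eta>: "0 < \<eta>" using h0 by (simp add: \<eta>_def)
  define \<delta> where "\<delta> = \<eta> / (K + 1)"
  have \<delta>: "0 < \<delta>" using \<eta> K by (simp add: \<delta>_def)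
  have K\<delta>: "K * \<delta> < \<eta>" using \<eta> K by (simp add: \<delta>_def field_simps)
  obtain J :: "(('x \<Rightarrow> real) \<Rightarrow> int) set" and a a' x1 where
    a: "\<And>j. j \<in> J \<Longrightarrow> centered_cell E A \<delta> (a j) (a' j) (x1 j)"
      "\<And>j. j \<in> J \<Longrightarrow> small_on_support A \<delta> (a j)"
    and a_sum: "1/2 \<le> (\<Sum>j\<in>J. a j x0)"
    by (rule E_cover[OF A \<delta>]) blast
  obtain I :: "(('y \<Rightarrow> real) \<Rightarrow> int) set" and b b' y1 where
    b: "\<And>i. i \<in> I \<Longrightarrow> centered_cell F B \<delta> (b i) (b' i) (y1 i)"
      "\<And>i. i \<in> I \<Longrightarrow> small_on_support B \<delta> (b i)"
    and b_sum: "1/2 \<le> (\<Sum>i\<in>I. b i y0)"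
    by (rule swapped.E_cover[OF B \<delta>]) blast
  obtain j i where j: "j \<in> J" "0 < a j x0" and i: "i \<in> I" "0 < b i y0"
    using sum_pos_imp_ex_pos[of "\<lambda>j. a j x0" J] sum_pos_imp_ex_pos[of "\<lambda>i. b i y0" I] a_sum b_sum
    by force
  have a01: "a j \<in> E" "\<And>x. 0 \<le> a j x \<and> a j x \<le> 1" and b01: "b i \<in> F" "\<And>y. 0 \<le> b i y \<and> b i y \<le> 1"
    using a(1)[OF j(1)] b(1)[OF i(1)] by (simp_all add: centered_cell_def cell_pair_def)
  have "chi (a j) (b i) p \<le> (1 / \<eta>) * \<bar>h p\<bar>" for p
    using chi_le_abs_lipschitz[OF lip less_imp_le[OF \<delta>] K\<delta> _ \<eta> a(2)[OF j(1)] a01(2) j(2)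
        b(2)[OF i(1)] b01(2) i(2)]
    by (simp add: \<eta>_def)
  then show thesis
    using that[of "a j" "b i"] a01 b01 j(2) i(2) by blast
qed

lemma graph_zero_imp_zero:
  assumes bi: "bi_injective E F \<phi>" and hz: "(h, 0) \<in> graph"
  shows "h = (\<lambda>p. 0)"
proof (rule ccontr)
  assume "h \<noteq> (\<lambda>p. 0)"
  then obtain x0 y0 where "h (x0, y0) \<noteq> 0" by (auto simp: fun_eq_iff)
  moreover obtain A B K where "finite A" "A \<subseteq> E" "finite B" "B \<subseteq> F" "0 \<le> K" "lipschitz_wrt A B K h"
    using graph_controlled[OF hz] unfolding controlled_def controlled_by_def by blast
  ultimately obtain a b c where ab: "a \<in> E" "b \<in> F" "\<And>x. 0 \<le> a x" "\<And>y. 0 \<le> b y"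
    and pos: "0 < a x0" "0 < b y0" and le: "\<And>p. chi a b p - c * \<bar>h p\<bar> \<le> 0"
    using obtain_chi_le_abs by (metis diff_le_0_iff_le)
  have "((\<lambda>p. chi a b p - c * \<bar>h p\<bar>), \<phi> a b - c *\<^sub>R riesz_abs 0) \<in> graph"
    by (rule graph_diff[OF graph.gen[OF ab(1,2)] graph.scale[OF graph_abs[OF hz]]])
  then have "\<phi> a b \<le> 0" using graph_nonpos le by simp
  moreover have "0 \<le> \<phi> a b" using ab by (intro phi_nonneg)
  ultimately have "\<phi> a b = 0" by simp
  then have "a = (\<lambda>x. 0) \<or> b = (\<lambda>y. 0)"
    using bi ab(1,2) unfolding bi_injective_def by blast
  then show False using pos by auto
qed

abbreviation chi_products :: "('x \<times> 'y \<Rightarrow> real) set" where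
  "chi_products \<equiv> {chi f g | f g. f \<in> E \<and> g \<in> F}"

abbreviation phi_products :: "'g set" where
  "phi_products \<equiv> {\<phi> f g | f g. f \<in> E \<and> g \<in> F}"

lemma graph_zero: "((\<lambda>p. 0), 0) \<in> graph"
  using graph.scale[OF graph.gen[OF E_const F_const], of 0] by simp

lemma fst_graph: "fst ` graph = gen_riesz_fun chi_products"
proof
  show "fst ` graph \<subseteq> gen_riesz_fun chi_products"
  proof (clarsimp simp: gen_riesz_fun_def)
    fix h z W assume "(h, z) \<in> graph" and W: "riesz_subspace_fun W" "chi_products \<subseteq> W"
    then show "h \<in> W"
    proof (induction rule: graph.induct)
      case (gen f g) then show ?case by blast
    next
      case (add h1 z1 h2 z2) then show ?case by (simp add: riesz_subspace_fun_add)
    next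
      case (scale h z c) then show ?case by (simp add: riesz_subspace_fun_scale)
    next
      case (max h1 z1 h2 z2) then show ?case by (simp add: riesz_subspace_fun_max)
    qed
  qed
  have "riesz_subspace_fun (fst ` graph)"
    unfolding riesz_subspace_fun_def
  proof (intro conjI ballI allI)
    show "(\<lambda>x. 0) \<in> fst ` graph" using graph_zero by force
    fix h1 h2 assume "h1 \<in> fst ` graph" "h2 \<in> fst ` graph"
    then obtain z1 z2 where "(h1, z1) \<in> graph" "(h2, z2) \<in> graph" by force
    then show "(\<lambda>x. h1 x + h2 x) \<in> fst ` graph" "(\<lambda>x. max (h1 x) (h2 x)) \<in> fst ` graph"
      using graph.add graph.max by force+
  next
    fix c h assume "h \<in> fst ` graph"
    then obtain z where "(h, z) \<in> graph" by force
    then show "(\<lambda>x. c * h x) \<in> fst ` graph" using graph.scale by force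
  qed
  moreover have "chi_products \<subseteq> fst ` graph" using graph.gen by force
  ultimately show "gen_riesz_fun chi_products \<subseteq> fst ` graph"
    unfolding gen_riesz_fun_def by blast
qed

lemma snd_graph: "snd ` graph = gen_riesz phi_products"
proof
  show "snd ` graph \<subseteq> gen_riesz phi_products"
  proof (clarsimp simp: gen_riesz_def)
    fix h z W assume "(h, z) \<in> graph" and W: "riesz_subspace W" "phi_products \<subseteq> W"
    then show "z \<in> W"
      by (induction rule: graph.induct) (use W in \<open>auto simp: riesz_subspace_def\<close>)
  qed
  have "riesz_subspace (snd ` graph)"
    unfolding riesz_subspace_def
  proof (intro conjI ballI allI)
    show "0 \<in> snd ` graph" using graph_zero by force
    fix z1 z2 assume "z1 \<in> snd ` graph" "z2 \<in> snd ` graph"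
    then obtain h1 h2 where "(h1, z1) \<in> graph" "(h2, z2) \<in> graph" by force
    then show "z1 + z2 \<in> snd ` graph" "sup z1 z2 \<in> snd ` graph"
      using graph.add graph.max by force+
  next
    fix c z assume "z \<in> snd ` graph"
    then obtain h where "(h, z) \<in> graph" by force
    then show "c *\<^sub>R z \<in> snd ` graph" using graph.scale by force
  qed
  moreover have "phi_products \<subseteq> snd ` graph" using graph.gen by force
  ultimately show "gen_riesz phi_products \<subseteq> snd ` graph"
    unfolding gen_riesz_def by blast
qed

definition extension :: "('x \<times> 'y \<Rightarrow> real) \<Rightarrow> 'g" where
  "extension h = (THE z. (h, z) \<in> graph)"

lemma extension_eq: "(h, z) \<in> graph \<Longrightarrow> extension h = z"
  unfolding extension_def using graph_unique by blast

lemma graph_extension: "h \<in> gen_riesz_fun chi_products \<Longrightarrow> (h, extension h) \<in> graph"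
  using fst_graph extension_eq by force

lemma extension_chi: "f \<in> E \<Longrightarrow> g \<in> F \<Longrightarrow> extension (chi f g) = \<phi> f g"
  by (rule extension_eq[OF graph.gen])

lemma extension_riesz_hom: "riesz_hom_on (gen_riesz_fun chi_products) extension"
  unfolding riesz_hom_on_def
  by (intro conjI ballI allI; rule extension_eq)
    (auto intro: graph.add graph.scale graph.max graph_extension)

lemma extension_unique:
  assumes T: "riesz_hom_on (gen_riesz_fun chi_products) T"
    and T_chi: "\<forall>f\<in>E. \<forall>g\<in>F. \<phi> f g = T (chi f g)"
    and h: "h \<in> gen_riesz_fun chi_products"
  shows "T h = extension h"
proof -
  have dom: "k \<in> gen_riesz_fun chi_products" if "(k, z) \<in> graph" for k z
    using that fst_graph by force
  have "T k = z" if "(k, z) \<in> graph" for k z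
    using that
  proof (induction rule: graph.induct)
    case (gen f g) then show ?case using T_chi by simp
  next
    case (add h1 z1 h2 z2) then show ?case using T dom by (simp add: riesz_hom_on_def)
  next
    case (scale h z c) then show ?case using T dom by (simp add: riesz_hom_on_def)
  next
    case (max h1 z1 h2 z2) then show ?case using T dom by (simp add: riesz_hom_on_def)
  qed
  then show ?thesis using graph_extension[OF h] by simp
qed

lemma extension_iso:
  assumes bi: "bi_injective E F \<phi>"
  shows "riesz_iso_onto (gen_riesz_fun chi_products) (gen_riesz phi_products) extension"
proof -
  let ?D = "gen_riesz_fun chi_products"
  have inj: "inj_on extension ?D"
  proof (rule inj_onI)
    fix h1 h2 assume h: "h1 \<in> ?D" "h2 \<in> ?D" and eq: "extension h1 = extension h2"
    have "((\<lambda>p. h1 p - h2 p), 0) \<in> graph"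
      using graph_diff[OF graph_extension[OF h(1)] graph_extension[OF h(2)]] eq by simp
    then have "(\<lambda>p. h1 p - h2 p) = (\<lambda>p. 0)" by (rule graph_zero_imp_zero[OF bi])
    then show "h1 = h2" by (simp add: fun_eq_iff)
  qed
  have img: "extension ` ?D = gen_riesz phi_products"
    unfolding snd_graph[symmetric]
  proof (intro equalityI subsetI)
    fix z assume "z \<in> extension ` ?D"
    then show "z \<in> snd ` graph" using graph_extension by force
  next
    fix z assume "z \<in> snd ` graph"
    then obtain h where "(h, z) \<in> graph" by force
    then show "z \<in> extension ` ?D" using fst_graph extension_eq by force
  qed
  have inv_sup: "inv_into ?D extension (sup v w)
      = (\<lambda>x. max (inv_into ?D extension v x) (inv_into ?D extension w x))"
    if "v \<in> gen_riesz phi_products" "w \<in> gen_riesz phi_products" for v w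
  proof -
    have "v \<in> extension ` ?D" "w \<in> extension ` ?D" using that img by simp_all
    then obtain h1 h2 where h: "h1 \<in> ?D" "h2 \<in> ?D" and vw: "v = extension h1" "w = extension h2"
      by blast
    have max: "(\<lambda>x. max (h1 x) (h2 x)) \<in> ?D"
      using graph.max[OF graph_extension[OF h(1)] graph_extension[OF h(2)]] fst_graph by force
    have "sup v w = extension (\<lambda>x. max (h1 x) (h2 x))"
      unfolding vw by (rule riesz_hom_on_max[OF extension_riesz_hom h, symmetric])
    then show ?thesis
      unfolding vw
      by (simp only: inv_into_f_f[OF inj max] inv_into_f_f[OF inj h(1)] inv_into_f_f[OF inj h(2)])
  qed
  show ?thesis
    unfolding riesz_iso_onto_def bij_betw_def using extension_riesz_hom inj img inv_sup by blast
qed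

end

theorem theorem3p4:
  fixes E :: "('x::t2_space \<Rightarrow> real) set"
    and F :: "('y::t2_space \<Rightarrow> real) set"
    and \<phi> :: "('x \<Rightarrow> real) \<Rightarrow> ('y \<Rightarrow> real) \<Rightarrow> 'g::archimedean_riesz_space"
  assumes "compact (UNIV :: 'x set)" and "compact (UNIV :: 'y set)"
    and "E \<subseteq> cfun" and "riesz_subspace_fun E" and "sup_dense E" and "\<forall>c. (\<lambda>x. c) \<in> E"
    and "F \<subseteq> cfun" and "riesz_subspace_fun F" and "sup_dense F" and "\<forall>c. (\<lambda>y. c) \<in> F"
    and "riesz_bimorphism E F \<phi>"
  shows "\<exists>T. riesz_hom_on (gen_riesz_fun {chi f g | f g. f \<in> E \<and> g \<in> F}) T
            \<and> (\<forall>f\<in>E. \<forall>g\<in>F. \<phi> f g = T (chi f g))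
            \<and> (\<forall>T'. riesz_hom_on (gen_riesz_fun {chi f g | f g. f \<in> E \<and> g \<in> F}) T'
                    \<and> (\<forall>f\<in>E. \<forall>g\<in>F. \<phi> f g = T' (chi f g))
                    \<longrightarrow> (\<forall>h\<in>gen_riesz_fun {chi f g | f g. f \<in> E \<and> g \<in> F}. T' h = T h))
            \<and> (bi_injective E F \<phi> \<longrightarrow>
                 riesz_iso_onto (gen_riesz_fun {chi f g | f g. f \<in> E \<and> g \<in> F})
                                (gen_riesz {\<phi> f g | f g. f \<in> E \<and> g \<in> F}) T)"
proof -
  have bounded: "bounded (range f)" if "compact (UNIV :: 'a set)" "f \<in> cfun"
    for f :: "'a::topological_space \<Rightarrow> real"
    using that by (intro compact_imp_bounded compact_continuous_image) (simp_all add: cfun_def)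
  interpret bounded_riesz_bimorphism E F \<phi>
  proof
    show "bounded (range f)" if "f \<in> E" for f
      using bounded[OF assms(1)] that assms(3) by blast
    show "bounded (range g)" if "g \<in> F" for g
      using bounded[OF assms(2)] that assms(7) by blast
  qed (use assms in simp_all)
  show ?thesis
  proof (intro exI[of _ extension] conjI allI impI ballI)
    show "riesz_hom_on (gen_riesz_fun chi_products) extension" by (rule extension_riesz_hom)
    show "\<phi> f g = extension (chi f g)" if "f \<in> E" "g \<in> F" for f g
      using extension_chi[OF that] by simp
    show "T' h = extension h"
      if "riesz_hom_on (gen_riesz_fun chi_products) T' \<and> (\<forall>f\<in>E. \<forall>g\<in>F. \<phi> f g = T' (chi f g))"
        and "h \<in> gen_riesz_fun chi_products" for T' h
      using that by (blast intro: extension_unique)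
    show "riesz_iso_onto (gen_riesz_fun chi_products) (gen_riesz phi_products) extension"
      if "bi_injective E F \<phi>"
      using that by (rule extension_iso)
  qed
qed

end
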